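(* Let $n\ge 1$, let $U$ be a unitary on $n$ compute qubits, let $\rho$ be an arbitrary $n$-qubit density matrix, and let $\mathcal{E}(\sigma)=\sum_i E_i\sigma E_i^\dagger$ be a noise map acting on the compute qubits only, each of whose Kraus operators $E_i$ has weight one (acts nontrivially on at most one qubit, possibly different qubits for different $i$). Then there exist two layers of checks ($m=2$), i.e. $n$-qubit unitaries $\tilde C_{1,k},\tilde C_{2,k}$, $k=1,2$, with $\tilde C_{2,k}U\tilde C_{1,k}=U$, such that, whenever the probability of obtaining outcome $0$ on both ancillas in the Pauli check sandwiching protocol (with noise $\mathcal{E}$ immediately after $U$) is nonzero, the postselected state $\rho_m$ satisfies $F(\rho_m,U\rho U^\dagger)=1$. Moreover, the controlled operations $C_{2,1},C_{2,2}$ can be implemented with a total of $2n$ CNOT gates (together with single-qubit gates).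
   Context: The $m$-layer Pauli check sandwiching protocol: for each $k$, let $C_{j,k}=\tilde C_{j,k}\otimes|1\rangle\langle 1|_k+\mathbb{I}\otimes|0\rangle\langle 0|_k$ ($j=1,2$) be the controlled unitary with control on ancilla $k$ and target the compute qubits. Start with the compute qubits in $\rho$ and $m$ ancillas in $|0\rangle$; apply a Hadamard to every ancilla; apply $C_{1,m},\dots,C_{1,1}$; apply $U$; apply $\mathcal{E}$ to the compute qubits; apply $C_{2,1},\dots,C_{2,m}$; apply a Hadamard to every ancilla; measure all ancillas in the computational basis and keep only runs where all outcomes are $0$. $\rho_m$ is the renormalized resulting state of the compute qubits. Fidelity is $F(\rho,\omega)=\left(\operatorname{tr}\sqrt{\sqrt{\rho}\,\omega\sqrt{\rho}}\right)^2$. *)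

theory Defs
  imports "Jordan_Normal_Form.Matrix" Complex_Main
begin

definition adj :: "complex mat \<Rightarrow> complex mat" where
  "adj A = mat (dim_col A) (dim_row A) (\<lambda>(i,j). cnj (A $$ (j,i)))"

definition tr :: "complex mat \<Rightarrow> complex" where
  "tr A = (\<Sum>i<dim_row A. A $$ (i,i))"

definition unitary_mat :: "nat \<Rightarrow> complex mat \<Rightarrow> bool" where
  "unitary_mat d U \<longleftrightarrow> U \<in> carrier_mat d d \<and> adj U * U = 1\<^sub>m d \<and> U * adj U = 1\<^sub>m d"

definition psd :: "nat \<Rightarrow> complex mat \<Rightarrow> bool" where
  "psd d A \<longleftrightarrow> A \<in> carrier_mat d d \<and> adj A = A \<and>
     (\<forall>v :: nat \<Rightarrow> complex. 0 \<le> Re (\<Sum>i<d. \<Sum>j<d. cnj (v i) * A $$ (i,j) * v j))"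

definition density :: "nat \<Rightarrow> complex mat \<Rightarrow> bool" where
  "density d \<rho> \<longleftrightarrow> psd d \<rho> \<and> tr \<rho> = 1"

text \<open>The (unique) positive semidefinite square root.\<close>
definition msqrt :: "complex mat \<Rightarrow> complex mat" where
  "msqrt A = (THE B. psd (dim_row A) B \<and> B * B = A)"

definition fidelity :: "complex mat \<Rightarrow> complex mat \<Rightarrow> complex" where
  "fidelity \<rho> \<omega> = (tr (msqrt (msqrt \<rho> * \<omega> * msqrt \<rho>)))\<^sup>2"

text \<open>Kronecker product; index (i,k) of A \<otimes> B is i * dim B + k (qubit 0 most significant).\<close>
definition kron :: "complex mat \<Rightarrow> complex mat \<Rightarrow> complex mat" where
  "kron A B = mat (dim_row A * dim_row B) (dim_col A * dim_col B)
     (\<lambda>(i,j). A $$ (i div dim_row B, j div dim_col B) * B $$ (i mod dim_row B, j mod dim_col B))"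

text \<open>Operator A (2x2) acting on qubit q (0-based) of an N-qubit register.\<close>
definition on_qubit :: "nat \<Rightarrow> nat \<Rightarrow> complex mat \<Rightarrow> complex mat" where
  "on_qubit N q A = kron (1\<^sub>m (2^q)) (kron A (1\<^sub>m (2^(N - q - 1))))"

definition weight_le1 :: "nat \<Rightarrow> complex mat \<Rightarrow> bool" where
  "weight_le1 n E \<longleftrightarrow> (\<exists>q<n. \<exists>A \<in> carrier_mat 2 2. E = on_qubit n q A)"

definition kraus_channel :: "nat \<Rightarrow> complex mat list \<Rightarrow> bool" where
  "kraus_channel d Ks \<longleftrightarrow> (\<forall>E \<in> set Ks. E \<in> carrier_mat d d) \<and>
     foldr (\<lambda>E acc. adj E * E + acc) Ks (0\<^sub>m d d) = 1\<^sub>m d"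

definition apply_kraus :: "complex mat list \<Rightarrow> complex mat \<Rightarrow> complex mat" where
  "apply_kraus Ks \<sigma> = foldr (\<lambda>E acc. E * \<sigma> * adj E + acc) Ks (0\<^sub>m (dim_row \<sigma>) (dim_col \<sigma>))"

definition proj0 :: "complex mat" where
  "proj0 = mat 2 2 (\<lambda>(i,j). if i = 0 \<and> j = 0 then 1 else 0)"
definition proj1 :: "complex mat" where
  "proj1 = mat 2 2 (\<lambda>(i,j). if i = 1 \<and> j = 1 then 1 else 0)"
definition pauliX :: "complex mat" where
  "pauliX = mat 2 2 (\<lambda>(i,j). if i \<noteq> j then 1 else 0)"
definition hadamard :: "complex mat" where
  "hadamard = mat 2 2 (\<lambda>(i,j). (if i = 1 \<and> j = 1 then -1 else 1) / complex_of_real (sqrt 2))"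

primrec hpow :: "nat \<Rightarrow> complex mat" where
  "hpow 0 = 1\<^sub>m 1"
| "hpow (Suc m) = kron hadamard (hpow m)"

text \<open>Register: n compute qubits (first tensor factor) and m ancillas (second factor);
  ancilla k (1 \<le> k \<le> m) is qubit k-1 of the ancilla register.\<close>
definition ctrl :: "nat \<Rightarrow> nat \<Rightarrow> nat \<Rightarrow> complex mat \<Rightarrow> complex mat" where
  "ctrl n m k Ct = kron Ct (on_qubit m (k - 1) proj1) + kron (1\<^sub>m (2^n)) (on_qubit m (k - 1) proj0)"

text \<open>layer1 gives C_{1,1} * ... * C_{1,m} (so C_{1,m} is applied first);
  layer2 gives C_{2,m} * ... * C_{2,1} (so C_{2,1} is applied first).\<close>
definition layer1_full :: "nat \<Rightarrow> nat \<Rightarrow> (nat \<Rightarrow> complex mat) \<Rightarrow> complex mat" where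
  "layer1_full n m C = foldr (\<lambda>k acc. ctrl n m k (C k) * acc) [1..<Suc m] (1\<^sub>m (2^n * 2^m))"

definition layer2_full :: "nat \<Rightarrow> nat \<Rightarrow> (nat \<Rightarrow> complex mat) \<Rightarrow> complex mat" where
  "layer2_full n m C = foldr (\<lambda>k acc. acc * ctrl n m k (C k)) [1..<Suc m] (1\<^sub>m (2^n * 2^m))"

definition anc_zero :: "nat \<Rightarrow> complex mat" where
  "anc_zero m = mat (2^m) (2^m) (\<lambda>(i,j). if i = 0 \<and> j = 0 then 1 else 0)"

text \<open>Unnormalized state of the whole register after projecting all ancillas onto |0>.\<close>
definition psp_final :: "nat \<Rightarrow> nat \<Rightarrow> (nat \<Rightarrow> complex mat) \<Rightarrow> (nat \<Rightarrow> complex mat)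
    \<Rightarrow> complex mat \<Rightarrow> complex mat list \<Rightarrow> complex mat \<Rightarrow> complex mat" where
  "psp_final n m C1 C2 U Ks \<rho> =
    (let Iw = 1\<^sub>m (2^n);
         Hd = kron Iw (hpow m);
         \<sigma>0 = kron \<rho> (anc_zero m);
         V1 = kron U (1\<^sub>m (2^m)) * layer1_full n m C1 * Hd;
         \<sigma>1 = V1 * \<sigma>0 * adj V1;
         \<sigma>2 = apply_kraus (map (\<lambda>E. kron E (1\<^sub>m (2^m))) Ks) \<sigma>1;
         V2 = Hd * layer2_full n m C2;
         \<sigma>3 = V2 * \<sigma>2 * adj V2;
         P = kron Iw (anc_zero m)
     in P * \<sigma>3 * P)"

definition ptrace_anc :: "nat \<Rightarrow> nat \<Rightarrow> complex mat \<Rightarrow> complex mat" where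
  "ptrace_anc n m \<sigma> = mat (2^n) (2^n) (\<lambda>(i,j). \<Sum>a<2^m. \<sigma> $$ (i * 2^m + a, j * 2^m + a))"

definition psp_prob :: "nat \<Rightarrow> nat \<Rightarrow> (nat \<Rightarrow> complex mat) \<Rightarrow> (nat \<Rightarrow> complex mat)
    \<Rightarrow> complex mat \<Rightarrow> complex mat list \<Rightarrow> complex mat \<Rightarrow> complex" where
  "psp_prob n m C1 C2 U Ks \<rho> = tr (psp_final n m C1 C2 U Ks \<rho>)"

definition psp_state :: "nat \<Rightarrow> nat \<Rightarrow> (nat \<Rightarrow> complex mat) \<Rightarrow> (nat \<Rightarrow> complex mat)
    \<Rightarrow> complex mat \<Rightarrow> complex mat list \<Rightarrow> complex mat \<Rightarrow> complex mat" where
  "psp_state n m C1 C2 U Ks \<rho> =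
     (1 / psp_prob n m C1 C2 U Ks \<rho>) \<cdot>\<^sub>m ptrace_anc n m (psp_final n m C1 C2 U Ks \<rho>)"

datatype gate = CNOT nat nat | G1 nat "complex mat"

fun gate_ok :: "nat \<Rightarrow> gate \<Rightarrow> bool" where
  "gate_ok N (CNOT c t) \<longleftrightarrow> c < N \<and> t < N \<and> c \<noteq> t"
| "gate_ok N (G1 q A) \<longleftrightarrow> q < N \<and> unitary_mat 2 A"

fun gate_mat :: "nat \<Rightarrow> gate \<Rightarrow> complex mat" where
  "gate_mat N (CNOT c t) = on_qubit N c proj0 + on_qubit N c proj1 * on_qubit N t pauliX"
| "gate_mat N (G1 q A) = on_qubit N q A"

text \<open>Gates are applied in list order (the first list element acts first).\<close>
primrec circuit_mat :: "nat \<Rightarrow> gate list \<Rightarrow> complex mat" where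
  "circuit_mat N [] = 1\<^sub>m (2^N)"
| "circuit_mat N (g # gs) = circuit_mat N gs * gate_mat N g"

definition is_cnot :: "gate \<Rightarrow> bool" where
  "is_cnot g = (case g of CNOT _ _ \<Rightarrow> True | G1 _ _ \<Rightarrow> False)"

definition cnot_count :: "gate list \<Rightarrow> nat" where
  "cnot_count gs = length (filter is_cnot gs)"

end

theory Submission
  imports Defs "Jordan_Normal_Form.Spectral_Radius"
begin

text \<open>Take the checks \<open>C\<^sub>2\<^sub>,\<^sub>1 = X\<^sup>\<otimes>\<^sup>n\<close>, \<open>C\<^sub>2\<^sub>,\<^sub>2 = Y\<^sup>\<otimes>\<^sup>n\<close> and \<open>C\<^sub>1\<^sub>,\<^sub>k = U\<^sup>\<dagger> C\<^sub>2\<^sub>,\<^sub>k\<^sup>\<dagger> U\<close>,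
  so that \<open>C\<^sub>2\<^sub>,\<^sub>k U C\<^sub>1\<^sub>,\<^sub>k = U\<close>. In the ancilla branch \<open>|s\<rangle>\<close> the compute register undergoes
  \<open>V\<^sub>s E V\<^sub>s\<^sup>\<dagger> U\<close> with \<open>V\<^sub>s \<in> {I, X\<^sup>\<otimes>\<^sup>n, Y\<^sup>\<otimes>\<^sup>n, Y\<^sup>\<otimes>\<^sup>n X\<^sup>\<otimes>\<^sup>n}\<close>, and the Hadamards followed by
  postselection on \<open>|00\<rangle>\<close> average these four branches. For a Kraus operator \<open>E\<close> acting on a
  single qubit this average is the Pauli twirl of \<open>E\<close>, i.e. a scalar multiple of the identity.
  Hence the unnormalised postselected state is a multiple of \<open>U \<rho> U\<^sup>\<dagger>\<close>, and after
  normalisation it equals \<open>U \<rho> U\<^sup>\<dagger>\<close>, whose fidelity with itself is \<open>1\<close>. The controlled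
  \<open>X\<^sup>\<otimes>\<^sup>n\<close> is \<open>n\<close> CNOTs, and the controlled \<open>Y\<^sup>\<otimes>\<^sup>n\<close> is \<open>n\<close> CNOTs conjugated by phase gates.\<close>

section \<open>Kronecker products\<close>

lemma sum_lessThan_mult_split: "(\<Sum>k<(a::nat)*b. f k) = (\<Sum>x<a. \<Sum>y<b. f (x*b+y))"
proof -
  have "(\<Sum>y<b. f (x*b+y)) = sum f {x*b..<x*b+b}" for x
    using sum.shift_bounds_nat_ivl[of f 0 "x*b" b] by (simp add: atLeast0LessThan add.commute)
  then show ?thesis by (simp add: sum.nat_group)
qed

lemma div_mod_less_mult: "i < a * (b::nat) \<Longrightarrow> i div b < a \<and> i mod b < b"
  by (metis less_mult_imp_div_less mod_less_divisor mult_0_right not_less0 zero_less_iff_neq_zero)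

lemma kron_dims[simp]:
  "dim_row (kron A B) = dim_row A * dim_row B" "dim_col (kron A B) = dim_col A * dim_col B"
  by (auto simp: kron_def)

lemma kron_carrier[simp,intro]:
  "A \<in> carrier_mat a b \<Longrightarrow> B \<in> carrier_mat c d \<Longrightarrow> kron A B \<in> carrier_mat (a*c) (b*d)"
  unfolding carrier_mat_def by simp

lemma kron_index: "i < dim_row A * dim_row B \<Longrightarrow> j < dim_col A * dim_col B \<Longrightarrow>
  kron A B $$ (i,j) = A $$ (i div dim_row B, j div dim_col B) * B $$ (i mod dim_row B, j mod dim_col B)"
  by (simp add: kron_def)

lemma kron_mult:
  assumes "dim_col A = dim_row C" "dim_col B = dim_row D"
  shows "kron A B * kron C D = kron (A * C) (B * D)"
proof (rule eq_matI)
  fix i j assume i: "i < dim_row (kron (A * C) (B * D))" and j: "j < dim_col (kron (A * C) (B * D))"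
  let ?rb = "dim_row B" let ?cd = "dim_col D" let ?cb = "dim_col B" let ?ca = "dim_col A"
  have i': "i < dim_row A * ?rb" and j': "j < dim_col C * ?cd" using i j by auto
  from div_mod_less_mult[OF i'] div_mod_less_mult[OF j'] have ii: "i div ?rb < dim_row A" "i mod ?rb < ?rb"
    and jj: "j div ?cd < dim_col C" "j mod ?cd < ?cd" by auto
  have "(kron A B * kron C D) $$ (i,j) = (\<Sum>k<?ca * ?cb. kron A B $$ (i,k) * kron C D $$ (k,j))"
    using assms i' j' by (simp add: scalar_prod_def atLeast0LessThan)
  also have "\<dots> = (\<Sum>x<?ca. \<Sum>y<?cb. kron A B $$ (i,x*?cb+y) * kron C D $$ (x*?cb+y,j))"
    by (rule sum_lessThan_mult_split)
  also have "\<dots> = (\<Sum>x<?ca. \<Sum>y<?cb. (A $$ (i div ?rb, x) * C $$ (x, j div ?cd)) * (B $$ (i mod ?rb, y) * D $$ (y, j mod ?cd)))"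
  proof (intro sum.cong refl)
    fix x y assume x: "x \<in> {..<?ca}" and y: "y \<in> {..<?cb}"
    have "x*?cb+y < Suc x * ?cb" using y by simp
    also have "\<dots> \<le> ?ca * ?cb" using x by (intro mult_le_mono1) simp
    finally show "kron A B $$ (i,x*?cb+y) * kron C D $$ (x*?cb+y,j) = (A $$ (i div ?rb, x) * C $$ (x, j div ?cd)) * (B $$ (i mod ?rb, y) * D $$ (y, j mod ?cd))"
      using i' j' y assms by (simp add: kron_index)
  qed
  also have "\<dots> = (\<Sum>x<?ca. A $$ (i div ?rb, x) * C $$ (x, j div ?cd)) * (\<Sum>y<?cb. B $$ (i mod ?rb, y) * D $$ (y, j mod ?cd))"
    by (simp add: sum_product)
  also have "\<dots> = kron (A * C) (B * D) $$ (i,j)"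
    using i' j' ii jj assms by (simp add: scalar_prod_def atLeast0LessThan kron_index)
  finally show "(kron A B * kron C D) $$ (i,j) = kron (A * C) (B * D) $$ (i,j)" .
qed (use assms in auto)

lemma kron_assoc: "kron (kron A B) C = kron A (kron B C)"
proof (rule eq_matI)
  fix i j assume i: "i < dim_row (kron A (kron B C))" and j: "j < dim_col (kron A (kron B C))"
  have i1: "i < dim_row A * dim_row B * dim_row C" and j1: "j < dim_col A * dim_col B * dim_col C"
    using i j by (auto simp: mult.assoc)
  have pos: "0 < dim_row B" "0 < dim_row C" "0 < dim_col B" "0 < dim_col C" using i1 j1
    by (auto intro!: Nat.gr0I)
  have a1: "i div dim_row C < dim_row A * dim_row B" "j div dim_col C < dim_col A * dim_col B"
    using div_mod_less_mult[OF i1] div_mod_less_mult[OF j1] by auto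
  have a2: "i mod (dim_row B * dim_row C) < dim_row B * dim_row C" "j mod (dim_col B * dim_col C) < dim_col B * dim_col C"
    using pos by auto
  have dd: "\<And>x y z::nat. x div y div z = x div z div y" by (metis div_mult2_eq mult.commute)
  have md: "0 < z \<Longrightarrow> (x mod (y*z)) div z = (x div z) mod y" for x y z :: nat
    by (simp add: mod_mult2_eq mult.commute[of y z])
  show "kron (kron A B) C $$ (i, j) = kron A (kron B C) $$ (i, j)"
    using i1 j1 a1 a2 pos dd[of i "dim_row C" "dim_row B"] dd[of j "dim_col C" "dim_col B"]
    by (simp add: kron_index mult.assoc div_mult2_eq md mod_mod_cancel
        mult.commute[of "dim_row C"] mult.commute[of "dim_col C"])
qed (auto simp: mult.assoc)

lemma kron_one: "kron (1\<^sub>m a) (1\<^sub>m b) = 1\<^sub>m (a*b)"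
proof (rule eq_matI)
  fix i j assume "i < dim_row (1\<^sub>m (a*b) :: complex mat)" and "j < dim_col (1\<^sub>m (a*b) :: complex mat)"
  then have i: "i < a*b" and j: "j < a*b" by auto
  have "(i = j) = (i div b = j div b \<and> i mod b = j mod b)"
    by (metis div_mult_mod_eq)
  then show "kron (1\<^sub>m a) (1\<^sub>m b) $$ (i, j) = 1\<^sub>m (a*b) $$ (i, j)"
    using i j div_mod_less_mult[OF i] div_mod_less_mult[OF j] by (simp add: kron_index)
qed auto

lemma kron_one_right[simp]: "kron A (1\<^sub>m 1) = A" "kron A (1\<^sub>m (Suc 0)) = A"
  by (rule eq_matI; auto simp: kron_index)+

lemma kron_one_left[simp]: "kron (1\<^sub>m 1) A = A" "kron (1\<^sub>m (Suc 0)) A = A"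
  by (rule eq_matI; auto simp: kron_index)+

lemma kron_add_left:
  "dim_row A = dim_row A' \<Longrightarrow> dim_col A = dim_col A' \<Longrightarrow> kron (A + A') B = kron A B + kron A' B"
  apply (rule eq_matI)
  subgoal for i j using div_mod_less_mult[of i "dim_row A" "dim_row B"] div_mod_less_mult[of j "dim_col A" "dim_col B"]
    by (simp add: kron_index algebra_simps)
  by auto

lemma kron_add_right:
  "dim_row B = dim_row B' \<Longrightarrow> dim_col B = dim_col B' \<Longrightarrow> kron A (B + B') = kron A B + kron A B'"
  apply (rule eq_matI)
  subgoal for i j using div_mod_less_mult[of i "dim_row A" "dim_row B"] div_mod_less_mult[of j "dim_col A" "dim_col B"]
    by (simp add: kron_index algebra_simps)
  by auto

lemma kron_smult_left: "kron (c \<cdot>\<^sub>m A) B = c \<cdot>\<^sub>m kron A B"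
  apply (rule eq_matI)
  subgoal for i j using div_mod_less_mult[of i "dim_row A" "dim_row B"] div_mod_less_mult[of j "dim_col A" "dim_col B"]
    by (simp add: kron_index algebra_simps)
  by auto

lemma kron_smult_right: "kron A (c \<cdot>\<^sub>m B) = c \<cdot>\<^sub>m kron A B"
  apply (rule eq_matI)
  subgoal for i j using div_mod_less_mult[of i "dim_row A" "dim_row B"] div_mod_less_mult[of j "dim_col A" "dim_col B"]
    by (simp add: kron_index algebra_simps)
  by auto

lemma kron_zero_left: "kron (0\<^sub>m a b) B = 0\<^sub>m (a * dim_row B) (b * dim_col B)"
  apply (rule eq_matI)
  subgoal for i j using div_mod_less_mult[of i a "dim_row B"] div_mod_less_mult[of j b "dim_col B"]
    by (simp add: kron_index)
  by auto

lemma kron_zero_right: "kron A (0\<^sub>m a b) = 0\<^sub>m (dim_row A * a) (dim_col A * b)"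
  apply (rule eq_matI)
  subgoal for i j using div_mod_less_mult[of i "dim_row A" a] div_mod_less_mult[of j "dim_col A" b]
    by (simp add: kron_index)
  by auto

lemma mult_assoc_dims: assumes "dim_col (A::'a::semiring_0 mat) = dim_row B" "dim_col B = dim_row C"
  shows "A * B * C = A * (B * C)"
  using assms by (intro assoc_mult_mat[of A "dim_row A" "dim_col A" _ "dim_col B" _ "dim_col C"]) auto

lemma adj_dims[simp]: "dim_row (adj A) = dim_col A" "dim_col (adj A) = dim_row A"
  by (auto simp: adj_def)

lemma adj_index[simp]: "i < dim_col A \<Longrightarrow> j < dim_row A \<Longrightarrow> adj A $$ (i,j) = cnj (A $$ (j,i))"
  by (simp add: adj_def)

lemma adj_carrier[simp,intro]: "A \<in> carrier_mat a b \<Longrightarrow> adj A \<in> carrier_mat b a"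
  unfolding carrier_mat_def by simp

lemma adj_adj[simp]: "adj (adj A) = A"
  by (rule eq_matI) auto

lemma adj_mult: "dim_col A = dim_row B \<Longrightarrow> adj (A * B) = adj B * adj A"
  by (rule eq_matI) (auto simp: scalar_prod_def mult.commute intro!: sum.cong)

lemma adj_smult: "adj (c \<cdot>\<^sub>m A) = cnj c \<cdot>\<^sub>m adj A"
  by (rule eq_matI) auto

lemma adj_one[simp]: "adj (1\<^sub>m n) = 1\<^sub>m n"
  by (rule eq_matI) auto

lemma adj_kron: "adj (kron A B) = kron (adj A) (adj B)"
  apply (rule eq_matI)
  subgoal for i j using div_mod_less_mult[of i "dim_col A" "dim_col B"] div_mod_less_mult[of j "dim_row A" "dim_row B"]
    by (simp add: kron_index)
  by auto

declare mult_assoc_dims[simp]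

lemma unitary_carrier: "unitary_mat n A \<Longrightarrow> A \<in> carrier_mat n n"
  by (simp add: unitary_mat_def)

lemma unitary_adj_mult: "unitary_mat n Q \<Longrightarrow> adj Q * Q = 1\<^sub>m n"
  by (simp add: unitary_mat_def)

lemma unitary_mult_adj: "unitary_mat n Q \<Longrightarrow> Q * adj Q = 1\<^sub>m n"
  by (simp add: unitary_mat_def)

lemma unitaryI: "A \<in> carrier_mat n n \<Longrightarrow> adj A * A = 1\<^sub>m n \<Longrightarrow> unitary_mat n A"
  unfolding unitary_mat_def using mat_mult_left_right_inverse[of "adj A" n A] by auto

lemma unitary_mult: assumes "unitary_mat n A" "unitary_mat n B" shows "unitary_mat n (A * B)"
proof (rule unitaryI)
  have A: "A \<in> carrier_mat n n" and B: "B \<in> carrier_mat n n" using assms unitary_carrier by auto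
  then show "A * B \<in> carrier_mat n n" by simp
  have "adj (A * B) * (A * B) = adj B * ((adj A * A) * B)"
    using A B by (simp add: adj_mult)
  then show "adj (A * B) * (A * B) = 1\<^sub>m n" using assms A B by (simp add: unitary_adj_mult)
qed

lemma unitary_adj: "unitary_mat n A \<Longrightarrow> unitary_mat n (adj A)"
  unfolding unitary_mat_def by auto

lemma unitary_adj_mult_cancel: assumes "unitary_mat n Q" "dim_row X = n" shows "adj Q * (Q * X) = X"
proof -
  have "adj Q * (Q * X) = (adj Q * Q) * X" using assms unitary_carrier[OF assms(1)] by simp
  then show ?thesis using assms by (simp add: unitary_adj_mult)
qed

lemma unitary_mult_adj_cancel: assumes "unitary_mat n Q" "dim_row X = n" shows "Q * (adj Q * X) = X"
proof -
  have "Q * (adj Q * X) = (Q * adj Q) * X" using assms unitary_carrier[OF assms(1)] by simp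
  then show ?thesis using assms by (simp add: unitary_mult_adj)
qed

section \<open>Spectral theorem and positive square roots\<close>

definition diag_matrix :: "nat \<Rightarrow> (nat \<Rightarrow> complex) \<Rightarrow> complex mat" where
  "diag_matrix n f = mat n n (\<lambda>(i,j). if i = j then f i else 0)"

lemma diag_matrix_carrier[simp]: "diag_matrix n f \<in> carrier_mat n n"
  by (simp add: diag_matrix_def)

lemma diag_matrix_dims[simp]: "dim_row (diag_matrix n f) = n" "dim_col (diag_matrix n f) = n"
  by (auto simp: diag_matrix_def)

lemma diag_matrix_index[simp]: "i < n \<Longrightarrow> j < n \<Longrightarrow> diag_matrix n f $$ (i,j) = (if i = j then f i else 0)"
  by (simp add: diag_matrix_def)
lemma sum_delta_mult[simp]:
  "k < (n::nat) \<Longrightarrow> (\<Sum>l<n. (if k = l then a l else 0) * b l) = a k * (b k :: 'a::comm_ring_1)"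
  by (simp add: if_distrib[of "\<lambda>x. x * _"] cong: if_cong)

lemma diag_matrix_mult_left: "X \<in> carrier_mat n m \<Longrightarrow> i < n \<Longrightarrow> j < m \<Longrightarrow>
    (diag_matrix n f * X) $$ (i,j) = f i * X $$ (i,j)"
  by (simp add: scalar_prod_def if_distrib[of "\<lambda>x. x * _"] sum.delta cong: if_cong)

lemma diag_matrix_mult_right: "X \<in> carrier_mat m n \<Longrightarrow> i < m \<Longrightarrow> j < n \<Longrightarrow>
    (X * diag_matrix n f) $$ (i,j) = X $$ (i,j) * f j"
  by (simp add: scalar_prod_def if_distrib[of "\<lambda>x. _ * x"] sum.delta' cong: if_cong)

lemma diag_matrix_mult: "diag_matrix n f * diag_matrix n g = diag_matrix n (\<lambda>i. f i * g i)"
  by (rule eq_matI) (auto simp del: index_mult_mat(1) simp: diag_matrix_mult_left[OF diag_matrix_carrier])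

lemma adj_diag_matrix: "adj (diag_matrix n f) = diag_matrix n (\<lambda>i. cnj (f i))"
  by (rule eq_matI) auto


lemma cscalar_prod_self: "w \<bullet>c w = complex_of_real (\<Sum>k<dim_vec w. (cmod (w $ k))\<^sup>2)"
proof -
  have "w \<bullet>c w = (\<Sum>k<dim_vec w. w $ k * cnj (w $ k))"
    by (simp add: scalar_prod_def atLeast0LessThan)
  also have "\<dots> = (\<Sum>k<dim_vec w. complex_of_real ((cmod (w $ k))\<^sup>2))"
    by (intro sum.cong refl) (use complex_norm_square in auto)
  finally show ?thesis by simp
qed

lemma unitary_normalized_columns:
  assumes ws: "set ws \<subseteq> carrier_vec n" "corthogonal ws" "length ws = n"
  defines "g \<equiv> \<lambda>j. \<Sum>k<n. (cmod (ws ! j $ k))\<^sup>2"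
  shows "unitary_mat n (mat n n (\<lambda>(i,j). complex_of_real (1 / sqrt (g j)) * ws ! j $ i))"
    (is "unitary_mat n ?W")
proof (rule unitaryI)
  let ?a = "\<lambda>j. complex_of_real (1 / sqrt (g j))"
  have wsc: "j < n \<Longrightarrow> ws ! j \<in> carrier_vec n" for j using ws by auto
  have gj: "j < n \<Longrightarrow> ws ! j \<bullet>c ws ! j = complex_of_real (g j)" for j
    using cscalar_prod_self[of "ws ! j"] wsc[of j] by (simp add: g_def)
  have gpos: "g j > 0" if j: "j < n" for j
  proof -
    have "ws ! j \<bullet>c ws ! j \<noteq> 0" using corthogonalD[OF ws(2)] j ws(3) by auto
    then have "g j \<noteq> 0" using gj[OF j] by auto
    moreover have "g j \<ge> 0" unfolding g_def by (intro sum_nonneg) auto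
    ultimately show ?thesis by auto
  qed
  show "?W \<in> carrier_mat n n" by simp
  show "adj ?W * ?W = 1\<^sub>m n"
  proof (rule eq_matI)
    fix i j assume "i < dim_row (1\<^sub>m n :: complex mat)" and "j < dim_col (1\<^sub>m n :: complex mat)"
    then have i: "i < n" and j: "j < n" by auto
    have "(adj ?W * ?W) $$ (i,j) = cnj (?a i) * ?a j * (\<Sum>k<n. (ws ! j $ k) * cnj (ws ! i $ k))"
      unfolding sum_distrib_left using i j
      by (simp add: scalar_prod_def atLeast0LessThan sum_distrib_left mult_ac)
    also have "(\<Sum>k<n. (ws ! j $ k) * cnj (ws ! i $ k)) = ws ! j \<bullet>c ws ! i"
      using wsc[OF i] by (simp add: scalar_prod_def atLeast0LessThan)
    also have "cnj (?a i) * ?a j * (ws ! j \<bullet>c ws ! i) = 1\<^sub>m n $$ (i,j)"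
    proof (cases "i = j")
      case True
      have "sqrt (g i) * sqrt (g i) = g i" using gpos[OF i] by simp
      then have "1 / sqrt (g i) * (1 / sqrt (g i)) * g i = 1" using gpos[OF i] by (simp add: field_simps)
      then have "cnj (?a i) * ?a i * complex_of_real (g i) = 1"
        unfolding complex_cnj_complex_of_real of_real_mult[symmetric] by simp
      then show ?thesis using True i gj[OF i] by simp
    next
      case False
      then show ?thesis using corthogonalD[OF ws(2)] i j ws(3) by auto
    qed
    finally show "(adj ?W * ?W) $$ (i,j) = 1\<^sub>m n $$ (i,j)" .
  qed auto
qed

lemma unitary_with_first_column:
  assumes v: "v \<in> carrier_vec n" and v0: "v \<noteq> 0\<^sub>v n"
  shows "\<exists>W c. unitary_mat n W \<and> (\<forall>k<n. W $$ (k,0) = c * v $ k)"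
proof -
  interpret cof_vec_space n "TYPE(complex)" .
  define b where "b = basis_completion v"
  from basis_completion[OF v v0, folded b_def]
  have dist_b: "distinct b" and indep: "\<not> lin_dep (set b)" and b: "set b \<subseteq> carrier_vec n"
    and hdb: "hd b = v" and len_b: "length b = n" by auto
  have n: "n \<noteq> 0" using v v0 by (auto intro!: eq_vecI)
  from hdb len_b n obtain vs where bv: "b = v # vs" by (cases b, auto)
  define ws where "ws = gram_schmidt n b"
  from gram_schmidt_result[OF b dist_b indep refl, folded ws_def]
  have ws: "set ws \<subseteq> carrier_vec n" "corthogonal ws" "length ws = n" by (auto simp: len_b)
  from gram_schmidt_hd[OF v, of vs, folded bv] have "hd ws = v" unfolding ws_def .
  then have "ws ! 0 = v" using ws(3) n by (cases ws) auto
  moreover note unitary_normalized_columns[OF ws]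
  ultimately show ?thesis using n
    by (intro exI[of _ "mat n n (\<lambda>(i,j). complex_of_real (1 / sqrt (\<Sum>k<n. (cmod (ws ! j $ k))\<^sup>2)) * ws ! j $ i)"]
        exI[of _ "complex_of_real (1 / sqrt (\<Sum>k<n. (cmod (ws ! 0 $ k))\<^sup>2))"]) auto
qed

definition block_diag1 :: "nat \<Rightarrow> complex mat \<Rightarrow> complex mat" where
  "block_diag1 m X = four_block_mat (1\<^sub>m 1) (0\<^sub>m 1 m) (0\<^sub>m m 1) X"

lemma block_diag1_carrier[simp]: "X \<in> carrier_mat m m \<Longrightarrow> block_diag1 m X \<in> carrier_mat (Suc m) (Suc m)"
  unfolding block_diag1_def using four_block_carrier_mat[of "1\<^sub>m 1" 1 1 X m m] by simp

lemma block_diag1_dims[simp]: "X \<in> carrier_mat m m \<Longrightarrow> dim_row (block_diag1 m X) = Suc m"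
  "X \<in> carrier_mat m m \<Longrightarrow> dim_col (block_diag1 m X) = Suc m"
  by (simp_all add: block_diag1_def)

lemma block_diag1_mult:
  "X \<in> carrier_mat m m \<Longrightarrow> Y \<in> carrier_mat m m \<Longrightarrow> block_diag1 m X * block_diag1 m Y = block_diag1 m (X * Y)"
  unfolding block_diag1_def by (subst mult_four_block_mat[of _ 1 1 _ m _ m _ _ 1 _ m]) auto

lemma adj_block_diag1: "X \<in> carrier_mat m m \<Longrightarrow> adj (block_diag1 m X) = block_diag1 m (adj X)"
  unfolding block_diag1_def by (rule eq_matI) auto

lemma unitary_block_diag1: "unitary_mat m X \<Longrightarrow> unitary_mat (Suc m) (block_diag1 m X)"
proof (rule unitaryI)
  assume u: "unitary_mat m X"
  then have X: "X \<in> carrier_mat m m" by (rule unitary_carrier)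
  then show "block_diag1 m X \<in> carrier_mat (Suc m) (Suc m)" by simp
  have "block_diag1 m (1\<^sub>m m) = 1\<^sub>m (Suc m)" by (simp add: block_diag1_def)
  then show "adj (block_diag1 m X) * block_diag1 m X = 1\<^sub>m (Suc m)"
    using u X by (simp add: adj_block_diag1 block_diag1_mult unitary_adj_mult)
qed

lemma unitary_conj_eigenvector_column:
  assumes A: "A \<in> carrier_mat n n" and uW: "unitary_mat n W" and v: "v \<in> carrier_vec n"
    and Av: "A *\<^sub>v v = e \<cdot>\<^sub>v v" and W0: "\<forall>k<n. W $$ (k,0) = c * v $ k" and i: "i < n"
  shows "(adj W * A * W) $$ (i,0) = (if i = 0 then e else 0)"
proof -
  have W: "W \<in> carrier_mat n n" using uW by (rule unitary_carrier)
  have colW: "col W 0 = c \<cdot>\<^sub>v v" using W W0 v i by (intro eq_vecI) auto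
  have "col (A * W) 0 = A *\<^sub>v col W 0" using A W i by (auto simp: mult_mat_vec_def)
  also have "\<dots> = c \<cdot>\<^sub>v (A *\<^sub>v v)" unfolding colW using A v by (simp add: mult_mat_vec)
  also have "\<dots> = e \<cdot>\<^sub>v col W 0" unfolding Av colW by (auto simp: mult.commute mult.left_commute)
  finally have colAW: "col (A * W) 0 = e \<cdot>\<^sub>v col W 0" .
  have "(adj W * A * W) $$ (i,0) = row (adj W) i \<bullet> col (A * W) 0" using i A W by simp
  also have "\<dots> = e * (adj W * W) $$ (i,0)" unfolding colAW using W i
    by (simp add: scalar_prod_smult_distrib[of _ n])
  finally show ?thesis using uW i by (simp add: unitary_adj_mult)
qed

lemma hermitian_deflation:
  assumes A: "A \<in> carrier_mat (Suc m) (Suc m)" and hA: "adj A = A"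
  shows "\<exists>W e A3. unitary_mat (Suc m) W \<and> A3 \<in> carrier_mat m m \<and> adj A3 = A3 \<and>
    adj W * A * W = four_block_mat (mat 1 1 (\<lambda>_. e)) (0\<^sub>m 1 m) (0\<^sub>m m 1) A3"
proof -
  let ?n = "Suc m"
  from spectrum_non_empty[OF A] obtain e where "eigenvalue A e" unfolding spectrum_def by auto
  then obtain v where "eigenvector A v e" unfolding eigenvalue_def by auto
  then have v: "v \<in> carrier_vec ?n" and v0: "v \<noteq> 0\<^sub>v ?n" and Av: "A *\<^sub>v v = e \<cdot>\<^sub>v v"
    using A unfolding eigenvector_def by auto
  from unitary_with_first_column[OF v v0] obtain W c
    where uW: "unitary_mat ?n W" and W0: "\<forall>k<?n. W $$ (k,0) = c * v $ k"
    by blast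
  have W: "W \<in> carrier_mat ?n ?n" using uW by (rule unitary_carrier)
  define A' where "A' = adj W * A * W"
  have A': "A' \<in> carrier_mat ?n ?n" using A W by (auto simp: A'_def)
  have hA': "adj A' = A'" using A W hA by (simp add: A'_def adj_mult)
  have col0: "A' $$ (i,0) = (if i = 0 then e else 0)" if "i < ?n" for i
    unfolding A'_def using unitary_conj_eigenvector_column[OF A uW v Av W0 that] .
  then have "cnj e = e" using hA' A' by (metis adj_index carrier_matD zero_less_Suc)
  then have row0: "A' $$ (0,j) = (if j = 0 then e else 0)" if "j < ?n" for j
    using hA' A' that col0[OF that] by (metis adj_index carrier_matD complex_cnj_zero zero_less_Suc)
  define A3 where "A3 = mat m m (\<lambda>(i,j). A' $$ (Suc i, Suc j))"
  have A3: "A3 \<in> carrier_mat m m" by (simp add: A3_def)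
  have hA3: "adj A3 = A3"
  proof (rule eq_matI)
    fix i j assume "i < dim_row A3" "j < dim_col A3"
    then have i: "i < m" and j: "j < m" using A3 by auto
    have "adj A3 $$ (i,j) = adj A' $$ (Suc i, Suc j)" using i j A' by (simp add: A3_def)
    then show "adj A3 $$ (i,j) = A3 $$ (i,j)" using hA' i j by (simp add: A3_def)
  qed (use A3 in auto)
  have "A' = four_block_mat (mat 1 1 (\<lambda>_. e)) (0\<^sub>m 1 m) (0\<^sub>m m 1) A3"
  proof (rule eq_matI)
    fix i j assume "i < dim_row (four_block_mat (mat 1 1 (\<lambda>_. e)) (0\<^sub>m 1 m) (0\<^sub>m m 1) A3)"
      "j < dim_col (four_block_mat (mat 1 1 (\<lambda>_. e)) (0\<^sub>m 1 m) (0\<^sub>m m 1) A3)"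
    then have i: "i < ?n" and j: "j < ?n" using A3 by auto
    show "A' $$ (i,j) = four_block_mat (mat 1 1 (\<lambda>_. e)) (0\<^sub>m 1 m) (0\<^sub>m m 1) A3 $$ (i,j)"
    proof (cases "i = 0 \<or> j = 0")
      case True
      then show ?thesis using col0[OF i] row0[OF j] i j A3 by auto
    next
      case False
      then obtain i' j' where "i = Suc i'" "j = Suc j'" by (cases i; cases j) auto
      then show ?thesis using i j A3 by (auto simp: A3_def)
    qed
  qed (use A' A3 in auto)
  then show ?thesis using uW A3 hA3 unfolding A'_def by blast
qed

lemma hermitian_unitary_diagonalization:
  "A \<in> carrier_mat n n \<Longrightarrow> adj A = A \<Longrightarrow> \<exists>Q f. unitary_mat n Q \<and> A = Q * diag_matrix n f * adj Q"
proof (induction n arbitrary: A)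
  case 0
  then show ?case
    by (intro exI[of _ "1\<^sub>m 0"] exI[of _ "\<lambda>_. 0"]) (auto simp: unitary_mat_def intro!: eq_matI)
next
  case (Suc m)
  let ?n = "Suc m"
  from hermitian_deflation[OF Suc.prems] obtain W e A3 where uW: "unitary_mat ?n W"
    and A3: "A3 \<in> carrier_mat m m" "adj A3 = A3"
    and WAW: "adj W * A * W = four_block_mat (mat 1 1 (\<lambda>_. e)) (0\<^sub>m 1 m) (0\<^sub>m m 1) A3"
    by blast
  from Suc.IH[OF A3] obtain Q3 f3 where uQ3: "unitary_mat m Q3" and A3eq: "A3 = Q3 * diag_matrix m f3 * adj Q3"
    by blast
  have W: "W \<in> carrier_mat ?n ?n" and Q3: "Q3 \<in> carrier_mat m m"
    using uW uQ3 by (auto simp: unitary_carrier)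
  define f where "f i = (if i = 0 then e else f3 (i - 1))" for i
  have "four_block_mat (mat 1 1 (\<lambda>_. e)) (0\<^sub>m 1 m) (0\<^sub>m m 1) (diag_matrix m f3) = diag_matrix ?n f"
    by (rule eq_matI) (auto simp: f_def)
  moreover have "adj W * A * W = block_diag1 m Q3 *
      four_block_mat (mat 1 1 (\<lambda>_. e)) (0\<^sub>m 1 m) (0\<^sub>m m 1) (diag_matrix m f3) * block_diag1 m (adj Q3)"
  proof -
    have "Q3 * (diag_matrix m f3 * adj Q3) \<in> carrier_mat m m" using Q3 by auto
    then show ?thesis unfolding WAW block_diag1_def A3eq using Q3
      by (simp add: mult_four_block_mat[of _ 1 1 _ m _ m _ _ 1 _ m] left_add_zero_mat)
  qed
  ultimately have WAW': "adj W * A * W = block_diag1 m Q3 * diag_matrix ?n f * block_diag1 m (adj Q3)"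
    by simp
  have "A = W * (adj W * A * W) * adj W"
    using Suc.prems(1) W by (simp add: unitary_mult_adj_cancel[OF uW] unitary_mult_adj[OF uW])
  also have "\<dots> = (W * block_diag1 m Q3) * diag_matrix ?n f * adj (W * block_diag1 m Q3)"
    unfolding WAW' using W Q3 by (simp add: adj_mult adj_block_diag1 carrier_matD)
  finally have "A = (W * block_diag1 m Q3) * diag_matrix ?n f * adj (W * block_diag1 m Q3)" .
  then show ?case using unitary_mult[OF uW unitary_block_diag1[OF uQ3]] by blast
qed

definition qform :: "nat \<Rightarrow> complex mat \<Rightarrow> (nat \<Rightarrow> complex) \<Rightarrow> complex" where
  "qform d A v = (\<Sum>i<d. \<Sum>j<d. cnj (v i) * A $$ (i,j) * v j)"

lemma psd_iff_qform: "psd d A \<longleftrightarrow> A \<in> carrier_mat d d \<and> adj A = A \<and> (\<forall>v. 0 \<le> Re (qform d A v))"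
  unfolding psd_def qform_def by simp

lemma qform_unitary_conj_diag:
  assumes Q: "Q \<in> carrier_mat n n"
  shows "qform n (Q * diag_matrix n f * adj Q) v =
    (\<Sum>k<n. f k * (cnj (\<Sum>i<n. cnj (Q $$ (i,k)) * v i) * (\<Sum>j<n. cnj (Q $$ (j,k)) * v j)))"
proof -
  have entry: "(Q * diag_matrix n f * adj Q) $$ (i,j) = (\<Sum>k<n. Q $$ (i,k) * f k * cnj (Q $$ (j,k)))"
    if "i < n" "j < n" for i j
    using Q that by (simp add: scalar_prod_def mult.assoc atLeast0LessThan)
  have "qform n (Q * diag_matrix n f * adj Q) v
      = (\<Sum>i<n. \<Sum>j<n. \<Sum>k<n. f k * ((cnj (v i) * Q $$ (i,k)) * (cnj (Q $$ (j,k)) * v j)))"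
    unfolding qform_def
    by (intro sum.cong refl) (simp del: mult_assoc_dims index_mult_mat add: entry sum_distrib_left sum_distrib_right mult_ac)
  also have "\<dots> = (\<Sum>i<n. \<Sum>k<n. \<Sum>j<n. f k * ((cnj (v i) * Q $$ (i,k)) * (cnj (Q $$ (j,k)) * v j)))"
    by (rule sum.cong[OF refl], rule sum.swap)
  also have "\<dots> = (\<Sum>k<n. \<Sum>i<n. \<Sum>j<n. f k * ((cnj (v i) * Q $$ (i,k)) * (cnj (Q $$ (j,k)) * v j)))"
    by (rule sum.swap)
  also have "\<dots> = (\<Sum>k<n. f k * (cnj (\<Sum>i<n. cnj (Q $$ (i,k)) * v i) * (\<Sum>j<n. cnj (Q $$ (j,k)) * v j)))"
    by (intro sum.cong refl) (simp add: sum_distrib_left sum_distrib_right cnj_sum mult_ac)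
  finally show ?thesis .
qed

lemma psd_unitary_conj_diag:
  assumes uQ: "unitary_mat n Q" and r: "\<forall>k. r k \<ge> 0"
  shows "psd n (Q * diag_matrix n (\<lambda>k. complex_of_real (r k)) * adj Q)"
proof -
  have Q: "Q \<in> carrier_mat n n" using uQ by (rule unitary_carrier)
  have "adj (Q * diag_matrix n (\<lambda>k. complex_of_real (r k)) * adj Q) = Q * diag_matrix n (\<lambda>k. complex_of_real (r k)) * adj Q"
    using Q by (simp add: adj_mult adj_diag_matrix)
  moreover have "0 \<le> Re (qform n (Q * diag_matrix n (\<lambda>k. complex_of_real (r k)) * adj Q) v)" for v
  proof -
    define w where "w k = (\<Sum>j<n. cnj (Q $$ (j,k)) * v j)" for k
    have "qform n (Q * diag_matrix n (\<lambda>k. complex_of_real (r k)) * adj Q) v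
        = (\<Sum>k<n. complex_of_real (r k * (cmod (w k))\<^sup>2))"
    proof -
      have "cnj z * z = complex_of_real ((cmod z)\<^sup>2)" for z
        by (metis complex_norm_square mult.commute)
      then show ?thesis unfolding qform_unitary_conj_diag[OF Q] w_def[symmetric]
        by (intro sum.cong refl) simp
    qed
    then show ?thesis using r by (simp add: sum_nonneg)
  qed
  moreover have "Q * diag_matrix n (\<lambda>k. complex_of_real (r k)) * adj Q \<in> carrier_mat n n"
    using Q by (auto intro!: mult_carrier_mat)
  ultimately show ?thesis by (simp add: psd_iff_qform)
qed

lemma psd_unitary_diagonalization:
  assumes p: "psd n A"
  shows "\<exists>Q r. unitary_mat n Q \<and> (\<forall>k. r k \<ge> 0) \<and> A = Q * diag_matrix n (\<lambda>k. complex_of_real (r k)) * adj Q"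
proof -
  have Ac: "A \<in> carrier_mat n n" and hA: "adj A = A" using p by (auto simp: psd_def)
  from hermitian_unitary_diagonalization[OF Ac hA] obtain Q f
    where uQ: "unitary_mat n Q" and A: "A = Q * diag_matrix n f * adj Q" by blast
  have Q: "Q \<in> carrier_mat n n" using uQ by (rule unitary_carrier)
  have D: "diag_matrix n f = adj Q * A * Q"
    unfolding A using uQ Q by (simp add: unitary_adj_mult_cancel unitary_adj_mult)
  have fk: "f k = complex_of_real (Re (f k)) \<and> Re (f k) \<ge> 0" if k: "k < n" for k
  proof -
    have "adj (diag_matrix n f) = diag_matrix n f" unfolding D using Q Ac hA by (simp add: adj_mult)
    then have "cnj (f k) = f k" using k by (metis adj_diag_matrix diag_matrix_index)
    then have "f k = complex_of_real (Re (f k))" by (simp add: complex_eq_iff)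
    moreover have "f k = (adj Q * A * Q) $$ (k,k)"
      using arg_cong[OF D, of "\<lambda>M. M $$ (k,k)"] k by (simp del: mult_assoc_dims index_mult_mat)
    moreover have "(adj Q * A * Q) $$ (k,k) = (\<Sum>i<n. cnj (Q $$ (i,k)) * (\<Sum>j<n. A $$ (i,j) * Q $$ (j,k)))"
      using Q Ac k by (simp add: scalar_prod_def atLeast0LessThan)
    moreover have "\<dots> = qform n A (\<lambda>i. Q $$ (i,k))"
      unfolding qform_def by (intro sum.cong refl) (simp add: sum_distrib_left mult_ac)
    ultimately show ?thesis using p by (simp add: psd_iff_qform)
  qed
  define r where "r k = (if k < n then Re (f k) else 0)" for k
  have "diag_matrix n (\<lambda>k. complex_of_real (r k)) = diag_matrix n f"
    by (rule eq_matI) (use fk in \<open>auto simp: r_def\<close>)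
  moreover have "\<forall>k. r k \<ge> 0" using fk by (simp add: r_def)
  ultimately show ?thesis using A uQ by metis
qed

lemma unitary_conj_diag_square:
  assumes "unitary_mat n Q"
  shows "(Q * diag_matrix n f * adj Q) * (Q * diag_matrix n f * adj Q) = Q * diag_matrix n (\<lambda>k. f k * f k) * adj Q"
proof -
  have "(Q * diag_matrix n f * adj Q) * (Q * diag_matrix n f * adj Q) = Q * (diag_matrix n f * diag_matrix n f) * adj Q"
    using assms unitary_carrier[OF assms] by (simp add: unitary_adj_mult_cancel)
  then show ?thesis by (simp add: diag_matrix_mult)
qed

lemma psd_sqrt_exists: assumes "psd n A" shows "\<exists>B. psd n B \<and> B * B = A"
proof -
  from psd_unitary_diagonalization[OF assms] obtain Q r where uQ: "unitary_mat n Q" and r: "\<forall>k. r k \<ge> 0"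
    and A: "A = Q * diag_matrix n (\<lambda>k. complex_of_real (r k)) * adj Q" by blast
  define B where "B = Q * diag_matrix n (\<lambda>k. complex_of_real (sqrt (r k))) * adj Q"
  have "psd n B" unfolding B_def by (rule psd_unitary_conj_diag[OF uQ]) (use r in auto)
  moreover have "B * B = A"
    unfolding B_def A unitary_conj_diag_square[OF uQ] using r by (simp flip: of_real_mult)
  ultimately show ?thesis by blast
qed

text \<open>Entrywise, \<open>T\<^sub>i\<^sub>j (r\<^sub>j\<^sup>2 - s\<^sub>i\<^sup>2) = 0\<close>, and \<open>r\<^sub>j\<^sup>2 = s\<^sub>i\<^sup>2\<close> forces \<open>r\<^sub>j = s\<^sub>i\<close> for nonnegative reals.\<close>
lemma diag_matrix_intertwine_sqrt:
  assumes T: "T \<in> carrier_mat n n" and r: "\<forall>k. r k \<ge> 0" and s: "\<forall>k. s k \<ge> 0"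
    and TF: "T * diag_matrix n (\<lambda>k. complex_of_real (r k * r k)) = diag_matrix n (\<lambda>k. complex_of_real (s k * s k)) * T"
  shows "T * diag_matrix n (\<lambda>k. complex_of_real (r k)) = diag_matrix n (\<lambda>k. complex_of_real (s k)) * T"
proof (rule eq_matI)
  fix i j assume "i < dim_row (diag_matrix n (\<lambda>k. complex_of_real (s k)) * T)"
    "j < dim_col (diag_matrix n (\<lambda>k. complex_of_real (s k)) * T)"
  then have i: "i < n" and j: "j < n" using T by auto
  have e: "T $$ (i,j) * complex_of_real (r j * r j) = complex_of_real (s i * s i) * T $$ (i,j)"
    using arg_cong[OF TF, of "\<lambda>M. M $$ (i,j)"] i j T
    by (simp del: index_mult_mat add: diag_matrix_mult_left diag_matrix_mult_right)
  have "T $$ (i,j) * complex_of_real (r j) = complex_of_real (s i) * T $$ (i,j)"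
  proof (cases "T $$ (i,j) = 0")
    case False
    then have "complex_of_real (r j * r j) = complex_of_real (s i * s i)" using e by (simp add: mult.commute)
    then have "r j * r j = s i * s i" by (simp only: of_real_eq_iff)
    then have "r j = s i" using r s by (metis real_sqrt_abs2 abs_of_nonneg power2_eq_square)
    then show ?thesis by (simp add: mult.commute)
  qed simp
  then show "(T * diag_matrix n (\<lambda>k. complex_of_real (r k))) $$ (i,j) = (diag_matrix n (\<lambda>k. complex_of_real (s k)) * T) $$ (i,j)"
    using i j T by (simp del: index_mult_mat add: diag_matrix_mult_left diag_matrix_mult_right)
qed (use T in auto)

lemma psd_sqrt_unique:
  assumes pB: "psd n B" and pC: "psd n C" and BC: "B * B = C * C"
  shows "B = C"
proof -
  from psd_unitary_diagonalization[OF pB] obtain Q r where uQ: "unitary_mat n Q" and r: "\<forall>k. r k \<ge> 0"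
    and B: "B = Q * diag_matrix n (\<lambda>k. complex_of_real (r k)) * adj Q" by blast
  from psd_unitary_diagonalization[OF pC] obtain R s where uR: "unitary_mat n R" and s: "\<forall>k. s k \<ge> 0"
    and C: "C = R * diag_matrix n (\<lambda>k. complex_of_real (s k)) * adj R" by blast
  have Q: "Q \<in> carrier_mat n n" and R: "R \<in> carrier_mat n n" using uQ uR by (auto simp: unitary_carrier)
  define T where "T = adj R * Q"
  have Tc: "T \<in> carrier_mat n n" using Q R by (auto simp: T_def)
  let ?F = "diag_matrix n (\<lambda>k. complex_of_real (r k * r k))"
  let ?G = "diag_matrix n (\<lambda>k. complex_of_real (s k * s k))"
  have eq: "Q * ?F * adj Q = R * ?G * adj R"
    using BC unfolding B C unitary_conj_diag_square[OF uQ] unitary_conj_diag_square[OF uR] by simp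
  have "T * ?F = adj R * (Q * ?F * adj Q) * Q"
    unfolding T_def using Q R uQ by (simp add: unitary_adj_mult)
  also have "\<dots> = ?G * T"
    unfolding eq T_def using Q R uR by (simp add: unitary_adj_mult_cancel)
  finally have TD: "T * diag_matrix n (\<lambda>k. complex_of_real (r k)) = diag_matrix n (\<lambda>k. complex_of_real (s k)) * T"
    by (rule diag_matrix_intertwine_sqrt[OF Tc r s])
  have "C = R * (diag_matrix n (\<lambda>k. complex_of_real (s k)) * T) * adj Q"
    unfolding C T_def using Q R uQ by (simp add: unitary_mult_adj)
  also have "\<dots> = R * (T * diag_matrix n (\<lambda>k. complex_of_real (r k))) * adj Q" unfolding TD ..
  also have "\<dots> = B" unfolding B T_def using Q R uR by (simp add: unitary_mult_adj_cancel)
  finally show ?thesis by simp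
qed

lemma msqrt_eq: assumes "dim_row A = n" "psd n B" "B * B = A" shows "msqrt A = B"
  unfolding msqrt_def using assms psd_sqrt_unique by (intro the_equality) auto

lemma fidelity_refl: assumes "density n \<sigma>" shows "fidelity \<sigma> \<sigma> = 1"
proof -
  have p: "psd n \<sigma>" and t: "tr \<sigma> = 1" using assms by (auto simp: density_def)
  have sc: "\<sigma> \<in> carrier_mat n n" using p by (simp add: psd_def)
  from psd_sqrt_exists[OF p] obtain S where pS: "psd n S" and SS: "S * S = \<sigma>" by blast
  have Sc: "S \<in> carrier_mat n n" using pS by (simp add: psd_def)
  have "msqrt \<sigma> = S" by (rule msqrt_eq[OF _ pS SS]) (use sc in simp)
  moreover have "S * \<sigma> * S = \<sigma> * \<sigma>" unfolding SS[symmetric] using Sc by simp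
  moreover have "msqrt (\<sigma> * \<sigma>) = \<sigma>" by (rule msqrt_eq[OF _ p refl]) (use sc in simp)
  ultimately show ?thesis unfolding fidelity_def using t by simp
qed

lemma tr_smult: "A \<in> carrier_mat d d \<Longrightarrow> tr (c \<cdot>\<^sub>m A) = c * tr A"
  by (simp add: tr_def sum_distrib_left)

lemma tr_mult_comm: assumes "A \<in> carrier_mat a b" "B \<in> carrier_mat b a" shows "tr (A * B) = tr (B * A)"
proof -
  have "tr (A * B) = (\<Sum>i<a. \<Sum>k<b. A $$ (i,k) * B $$ (k,i))"
    unfolding tr_def using assms by (simp add: scalar_prod_def atLeast0LessThan)
  also have "\<dots> = (\<Sum>k<b. \<Sum>i<a. B $$ (k,i) * A $$ (i,k))"
    by (subst sum.swap) (simp add: mult.commute)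
  also have "\<dots> = tr (B * A)"
    unfolding tr_def using assms by (simp add: scalar_prod_def atLeast0LessThan)
  finally show ?thesis .
qed

lemma tr_unitary_conj: assumes uU: "unitary_mat d U" and \<rho>: "\<rho> \<in> carrier_mat d d"
  shows "tr (U * \<rho> * adj U) = tr \<rho>"
proof -
  have U: "U \<in> carrier_mat d d" using uU by (rule unitary_carrier)
  have "tr (U * \<rho> * adj U) = tr (U * (\<rho> * adj U))" using U \<rho> by simp
  also have "\<dots> = tr ((\<rho> * adj U) * U)" using U \<rho> by (intro tr_mult_comm) auto
  also have "(\<rho> * adj U) * U = \<rho>" using \<rho> U uU by (simp add: unitary_adj_mult)
  finally show ?thesis .
qed

lemma density_unitary_conj:
  assumes d: "density n \<rho>" and uU: "unitary_mat n U"
  shows "density n (U * \<rho> * adj U)"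
proof -
  have p: "psd n \<rho>" and t: "tr \<rho> = 1" using d by (auto simp: density_def)
  have U: "U \<in> carrier_mat n n" using uU by (rule unitary_carrier)
  from psd_unitary_diagonalization[OF p] obtain Q r where uQ: "unitary_mat n Q" and r: "\<forall>k. r k \<ge> 0"
    and \<rho>: "\<rho> = Q * diag_matrix n (\<lambda>k. complex_of_real (r k)) * adj Q" by blast
  have Q: "Q \<in> carrier_mat n n" using uQ by (rule unitary_carrier)
  have "U * \<rho> * adj U = (U * Q) * diag_matrix n (\<lambda>k. complex_of_real (r k)) * adj (U * Q)"
    unfolding \<rho> using U Q by (simp add: adj_mult)
  then have "psd n (U * \<rho> * adj U)"
    using psd_unitary_conj_diag[OF unitary_mult[OF uU uQ] r] by simp
  moreover have "tr (U * \<rho> * adj U) = 1"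
    using tr_unitary_conj[OF uU] p t by (simp add: psd_def)
  ultimately show ?thesis by (simp add: density_def)
qed

lemma less_2_cases: "(i::nat) < 2 \<longleftrightarrow> i = 0 \<or> i = 1" by auto

lemma sum_lessThan_2: "(\<Sum>k\<in>{0..<2::nat}. f k) = f 0 + f 1"
  by (simp add: eval_nat_numeral)

lemma mat2_mult[simp]: "mat 2 2 f * mat 2 2 g = mat 2 2 (\<lambda>(i,j). f (i,0) * g (0,j) + f (i,1) * g (1,j))"
  by (rule eq_matI) (auto simp: scalar_prod_def sum_lessThan_2)

lemma mat2_adj[simp]: "adj (mat 2 2 f) = mat 2 2 (\<lambda>(i,j). cnj (f (j,i)))"
  by (rule eq_matI) auto

lemma mat2_add[simp]: "mat 2 2 f + mat 2 2 g = mat 2 2 (\<lambda>ij. f ij + g ij)"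
  by (rule eq_matI) auto

lemma mat2_eq_iff:
  "mat 2 2 f = mat 2 2 g \<longleftrightarrow> f (0,0) = g (0,0) \<and> f (0,1) = g (0,1) \<and> f (1,0) = g (1,0) \<and> f (1,1) = g (1,1)"
proof
  assume "mat 2 2 f = mat 2 2 g"
  then have "\<And>i j. i < 2 \<Longrightarrow> j < 2 \<Longrightarrow> f (i,j) = g (i,j)" by (metis index_mat(1))
  then show "f (0,0) = g (0,0) \<and> f (0,1) = g (0,1) \<and> f (1,0) = g (1,0) \<and> f (1,1) = g (1,1)" by simp
qed (intro eq_matI, auto simp: less_2_cases)

lemma one_mat2: "1\<^sub>m 2 = mat 2 2 (\<lambda>(i,j). if i = j then 1 else 0)"
  by (rule eq_matI) auto

lemma zero_mat2: "0\<^sub>m 2 2 = mat 2 2 (\<lambda>_. 0)"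
  by (rule eq_matI) auto

lemma smult_mat2: "c \<cdot>\<^sub>m mat 2 2 f = mat 2 2 (\<lambda>ij. c * f ij)"
  by (rule eq_matI) auto

lemma mat2_of_carrier: "A \<in> carrier_mat 2 2 \<Longrightarrow> A = mat 2 2 (\<lambda>(i,j). A $$ (i,j))"
  by (rule eq_matI) auto

lemma proj0_carrier[simp]: "proj0 \<in> carrier_mat 2 2" by (simp add: proj0_def)
lemma proj1_carrier[simp]: "proj1 \<in> carrier_mat 2 2" by (simp add: proj1_def)
lemma pauliX_carrier[simp]: "pauliX \<in> carrier_mat 2 2" by (simp add: pauliX_def)

lemma proj_mult_add:
  "proj0 * proj0 = proj0" "proj1 * proj1 = proj1" "proj0 * proj1 = 0\<^sub>m 2 2" "proj1 * proj0 = 0\<^sub>m 2 2"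
  "proj1 + proj0 = 1\<^sub>m 2"
  by (simp_all add: proj0_def proj1_def one_mat2 zero_mat2 mat2_eq_iff)

definition phase_gate :: "complex mat" where
  "phase_gate = mat 2 2 (\<lambda>(i,j). if i = 0 \<and> j = 0 then 1 else if i = 1 \<and> j = 1 then \<i> else 0)"

definition pauliY :: "complex mat" where
  "pauliY = mat 2 2 (\<lambda>(i,j). if i = 0 \<and> j = 1 then - \<i> else if i = 1 \<and> j = 0 then \<i> else 0)"

lemma phase_gate_carrier[simp]: "phase_gate \<in> carrier_mat 2 2" by (simp add: phase_gate_def)
lemma pauliY_carrier[simp]: "pauliY \<in> carrier_mat 2 2" by (simp add: pauliY_def)

lemma phase_gate_conj_pauliX: "phase_gate * pauliX * adj phase_gate = pauliY"
  by (simp add: phase_gate_def pauliX_def pauliY_def mat2_eq_iff)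

lemma unitary_phase_gate: "unitary_mat 2 phase_gate"
  by (rule unitaryI) (simp_all add: phase_gate_def one_mat2 mat2_eq_iff)

lemma unitary_pauliX: "unitary_mat 2 pauliX"
  by (rule unitaryI) (simp_all add: pauliX_def one_mat2 mat2_eq_iff)

lemma unitary_pauliY: "unitary_mat 2 pauliY"
  by (rule unitaryI) (simp_all add: pauliY_def one_mat2 mat2_eq_iff)

text \<open>Conjugation by \<open>I, X, Y\<close> and \<open>YX = -\<i>Z\<close> averages \<open>A\<close> over the Pauli group,
  which annihilates its traceless part.\<close>
lemma pauli_twirl:
  assumes "A \<in> carrier_mat 2 2"
  shows "A + pauliX * A * adj pauliX + pauliY * A * adj pauliY + pauliY * (pauliX * A * adj pauliX) * adj pauliY
     = (2 * (A $$ (0,0) + A $$ (1,1))) \<cdot>\<^sub>m 1\<^sub>m 2"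
proof -
  obtain f where "A = mat 2 2 f" using mat2_of_carrier[OF assms] by blast
  then show ?thesis
    by (simp del: mult_assoc_dims add: pauliX_def pauliY_def one_mat2 smult_mat2 mat2_eq_iff algebra_simps)
qed

primrec tensor_pow :: "nat \<Rightarrow> complex mat \<Rightarrow> complex mat" where
  "tensor_pow 0 A = 1\<^sub>m 1"
| "tensor_pow (Suc k) A = kron (tensor_pow k A) A"

lemma tensor_pow_carrier[simp]: "A \<in> carrier_mat 2 2 \<Longrightarrow> tensor_pow k A \<in> carrier_mat (2^k) (2^k)"
proof (induction k)
  case (Suc k)
  then have "kron (tensor_pow k A) A \<in> carrier_mat (2^k*2) (2^k*2)" by (intro kron_carrier)
  then show ?case by (simp add: mult.commute)
qed simp

lemma tensor_pow_dims[simp]: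
  "A \<in> carrier_mat 2 2 \<Longrightarrow> dim_row (tensor_pow k A) = 2^k"
  "A \<in> carrier_mat 2 2 \<Longrightarrow> dim_col (tensor_pow k A) = 2^k"
  using tensor_pow_carrier[of A k] by (auto simp del: tensor_pow_carrier)

lemma tensor_pow_add: "tensor_pow (a + b) A = kron (tensor_pow a A) (tensor_pow b A)"
  by (induction b) (auto simp: kron_assoc)

lemma tensor_pow_mult:
  "A \<in> carrier_mat 2 2 \<Longrightarrow> B \<in> carrier_mat 2 2 \<Longrightarrow> tensor_pow k A * tensor_pow k B = tensor_pow k (A * B)"
proof (induction k)
  case (Suc k)
  then show ?case by (simp add: kron_mult)
qed simp

lemma tensor_pow_adj: "adj (tensor_pow k A) = tensor_pow k (adj A)"
  by (induction k) (auto simp: adj_kron)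

lemma tensor_pow_one: "tensor_pow k (1\<^sub>m 2) = 1\<^sub>m (2^k)"
proof (induction k)
  case (Suc k)
  then show ?case by (simp add: kron_one mult.commute)
qed simp

lemma unitary_tensor_pow: "unitary_mat 2 A \<Longrightarrow> unitary_mat (2^k) (tensor_pow k A)"
  using unitary_carrier[of 2 A] by (simp add: unitary_mat_def tensor_pow_adj tensor_pow_mult tensor_pow_one del: mult_assoc_dims)

lemma tensor_pow_split:
  "q < n \<Longrightarrow> tensor_pow n A = kron (tensor_pow q A) (kron A (tensor_pow (n - q - 1) A))"
  using tensor_pow_add[of q "1 + (n - q - 1)" A] tensor_pow_add[of 1 "n - q - 1" A] by simp

lemma pow2_split_at_qubit: "q < n \<Longrightarrow> (2::nat)^q * (2 * 2^(n - Suc q)) = 2^n"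
proof -
  assume "q < n"
  then have "q + (1 + (n - Suc q)) = n" by simp
  then show ?thesis by (metis power_add power_one_right)
qed

lemma on_qubit_carrier[simp]: "A \<in> carrier_mat 2 2 \<Longrightarrow> q < n \<Longrightarrow> on_qubit n q A \<in> carrier_mat (2^n) (2^n)"
proof -
  assume "A \<in> carrier_mat 2 2" "q < n"
  then have "on_qubit n q A \<in> carrier_mat (2^q * (2 * 2^(n-q-1))) (2^q * (2 * 2^(n-q-1)))"
    unfolding on_qubit_def by (intro kron_carrier) auto
  then show ?thesis using pow2_split_at_qubit[OF \<open>q < n\<close>] by simp
qed

lemma on_qubit_mult:
  "A \<in> carrier_mat 2 2 \<Longrightarrow> B \<in> carrier_mat 2 2 \<Longrightarrow> on_qubit n q A * on_qubit n q B = on_qubit n q (A * B)"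
  unfolding on_qubit_def by (simp add: kron_mult)

lemma on_qubit_add:
  "A \<in> carrier_mat 2 2 \<Longrightarrow> B \<in> carrier_mat 2 2 \<Longrightarrow> on_qubit n q A + on_qubit n q B = on_qubit n q (A + B)"
  unfolding on_qubit_def by (simp add: kron_add_left kron_add_right)

lemma on_qubit_smult: "on_qubit n q (c \<cdot>\<^sub>m A) = c \<cdot>\<^sub>m on_qubit n q A"
  unfolding on_qubit_def by (simp add: kron_smult_left kron_smult_right)

lemma on_qubit_one: "q < n \<Longrightarrow> on_qubit n q (1\<^sub>m 2) = 1\<^sub>m (2^n)"
  unfolding on_qubit_def by (simp add: kron_one pow2_split_at_qubit)

lemma tensor_pow_conj_on_qubit:
  assumes q: "q < n" and A: "A \<in> carrier_mat 2 2" and M: "unitary_mat 2 M"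
  shows "tensor_pow n M * on_qubit n q A * adj (tensor_pow n M) = on_qubit n q (M * A * adj M)"
proof -
  have Mc: "M \<in> carrier_mat 2 2" using M by (rule unitary_carrier)
  have u: "tensor_pow k M * adj (tensor_pow k M) = 1\<^sub>m (2^k)" for k
    using unitary_tensor_pow[OF M, of k] by (simp add: unitary_mat_def)
  have "tensor_pow n M * on_qubit n q A * adj (tensor_pow n M)
      = kron (tensor_pow q M * 1\<^sub>m (2^q) * adj (tensor_pow q M))
          (kron (M * A * adj M) (tensor_pow (n-q-1) M * 1\<^sub>m (2^(n-q-1)) * adj (tensor_pow (n-q-1) M)))"
    unfolding tensor_pow_split[OF q, of M] on_qubit_def adj_kron using Mc A
    by (simp del: mult_assoc_dims add: kron_mult)
  also have "\<dots> = on_qubit n q (M * A * adj M)"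
    unfolding on_qubit_def using Mc by (simp add: u)
  finally show ?thesis .
qed

definition anc_ctrl :: "nat \<Rightarrow> complex mat \<Rightarrow> complex mat \<Rightarrow> complex mat" where
  "anc_ctrl k A B = kron A (on_qubit 2 (k - 1) proj1) + kron B (on_qubit 2 (k - 1) proj0)"

lemma ctrl_eq_anc_ctrl: "ctrl n 2 k C = anc_ctrl k C (1\<^sub>m (2^n))"
  by (simp add: ctrl_def anc_ctrl_def)

lemma on_qubit2_carrier[simp]: "j < 2 \<Longrightarrow> P \<in> carrier_mat 2 2 \<Longrightarrow> on_qubit 2 j P \<in> carrier_mat 4 4"
  using on_qubit_carrier[of P j 2] by simp

lemma on_qubit2_dims[simp]:
  "j < 2 \<Longrightarrow> P \<in> carrier_mat 2 2 \<Longrightarrow> dim_row (on_qubit 2 j P) = 4"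
  "j < 2 \<Longrightarrow> P \<in> carrier_mat 2 2 \<Longrightarrow> dim_col (on_qubit 2 j P) = 4"
  using on_qubit2_carrier[of j P] by (auto simp del: on_qubit2_carrier)

lemma anc_ctrl_carrier[simp]:
  "k \<in> {1,2} \<Longrightarrow> A \<in> carrier_mat d d \<Longrightarrow> B \<in> carrier_mat d d \<Longrightarrow> anc_ctrl k A B \<in> carrier_mat (d*4) (d*4)"
  unfolding anc_ctrl_def by (auto intro!: add_carrier_mat kron_carrier)

lemma anc_ctrl_dims[simp]:
  "k \<in> {1,2} \<Longrightarrow> A \<in> carrier_mat d d \<Longrightarrow> B \<in> carrier_mat d d \<Longrightarrow> dim_row (anc_ctrl k A B) = d*4"
  "k \<in> {1,2} \<Longrightarrow> A \<in> carrier_mat d d \<Longrightarrow> B \<in> carrier_mat d d \<Longrightarrow> dim_col (anc_ctrl k A B) = d*4"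
  using anc_ctrl_carrier[of k A d B] by (auto simp del: anc_ctrl_carrier)

lemma anc_ctrl_mult:
  assumes k: "k \<in> {1,2}" and A: "A \<in> carrier_mat d d" and B: "B \<in> carrier_mat d d"
    and C: "C \<in> carrier_mat d d" and D: "D \<in> carrier_mat d d"
  shows "anc_ctrl k A B * anc_ctrl k C D = anc_ctrl k (A * C) (B * D)"
proof -
  obtain j where kj: "k - 1 = j" and j: "j < 2" using k by auto
  let ?p1 = "on_qubit 2 j proj1" let ?p0 = "on_qubit 2 j proj0"
  have p1: "?p1 \<in> carrier_mat 4 4" and p0: "?p0 \<in> carrier_mat 4 4" using j by auto
  have zero: "on_qubit 2 j (0\<^sub>m 2 2) = 0\<^sub>m 4 4"
    using j by (auto simp: on_qubit_def kron_zero_left kron_zero_right less_2_cases)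
  have pp: "?p1 * ?p1 = ?p1" "?p0 * ?p0 = ?p0" "?p1 * ?p0 = 0\<^sub>m 4 4" "?p0 * ?p1 = 0\<^sub>m 4 4"
    by (simp_all add: on_qubit_mult proj_mult_add zero)
  have X1: "kron A ?p1 \<in> carrier_mat (d*4) (d*4)" and X2: "kron B ?p0 \<in> carrier_mat (d*4) (d*4)"
    and Y1: "kron C ?p1 \<in> carrier_mat (d*4) (d*4)" and Y2: "kron D ?p0 \<in> carrier_mat (d*4) (d*4)"
    using A B C D p1 p0 by (auto intro!: kron_carrier)
  have "anc_ctrl k A B * anc_ctrl k C D = (kron A ?p1 + kron B ?p0) * kron C ?p1 + (kron A ?p1 + kron B ?p0) * kron D ?p0"
    unfolding anc_ctrl_def kj by (rule mult_add_distrib_mat[OF add_carrier_mat[OF X2] Y1 Y2])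
  also have "\<dots> = (kron A ?p1 * kron C ?p1 + kron B ?p0 * kron C ?p1) + (kron A ?p1 * kron D ?p0 + kron B ?p0 * kron D ?p0)"
    by (simp only: add_mult_distrib_mat[OF X1 X2 Y1] add_mult_distrib_mat[OF X1 X2 Y2])
  also have "\<dots> = (kron (A * C) ?p1 + kron (B * C) (0\<^sub>m 4 4)) + (kron (A * D) (0\<^sub>m 4 4) + kron (B * D) ?p0)"
    using A B C D p1 p0 j by (simp add: kron_mult pp)
  also have "\<dots> = anc_ctrl k (A * C) (B * D)"
    unfolding anc_ctrl_def kj using A B C D p1 p0 by (simp add: kron_zero_right)
  finally show ?thesis .
qed

lemma kron_one4_eq_anc_ctrl:
  assumes "k \<in> {1,2}" shows "kron M (1\<^sub>m 4) = anc_ctrl k M M"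
proof -
  obtain j where kj: "k - 1 = j" and j: "j < 2" using assms by auto
  have "1\<^sub>m 4 = on_qubit 2 j proj1 + on_qubit 2 j proj0"
    using j on_qubit_one[of j 2] by (simp add: on_qubit_add proj_mult_add)
  then show ?thesis unfolding anc_ctrl_def kj using j by (simp add: kron_add_right)
qed

lemma on_qubit_ancilla: "j < 2 \<Longrightarrow> on_qubit (n+2) (n+j) P = kron (1\<^sub>m (2^n)) (on_qubit 2 j P)"
  unfolding on_qubit_def by (simp add: kron_assoc[symmetric] kron_one power_add)

lemma on_qubit_compute: assumes "q < n" shows "on_qubit (n+2) q A = kron (on_qubit n q A) (1\<^sub>m 4)"
proof -
  have "Suc n - q = (n - Suc q) + 2" using assms by simp
  then have "(2::nat)^(Suc n - q) = 2^(n - Suc q) * 4" by (simp add: power_add)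
  then show ?thesis unfolding on_qubit_def by (simp add: kron_assoc kron_one)
qed

lemma gate_mat_CNOT_anc_ctrl:
  assumes k: "k \<in> {1,2}" and q: "q < n"
  shows "gate_mat (n+2) (CNOT (n + (k - 1)) q) = anc_ctrl k (on_qubit n q pauliX) (1\<^sub>m (2^n))"
proof -
  have j: "k - 1 < 2" using k by auto
  have X: "on_qubit n q pauliX \<in> carrier_mat (2^n) (2^n)" using q by simp
  have "gate_mat (n+2) (CNOT (n + (k - 1)) q)
      = kron (1\<^sub>m (2^n)) (on_qubit 2 (k-1) proj0) + kron (on_qubit n q pauliX) (on_qubit 2 (k-1) proj1)"
    unfolding gate_mat.simps on_qubit_ancilla[OF j] on_qubit_compute[OF q] using X j by (simp add: kron_mult)
  also have "\<dots> = anc_ctrl k (on_qubit n q pauliX) (1\<^sub>m (2^n))"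
    unfolding anc_ctrl_def using X j by (intro comm_add_mat) (auto intro!: kron_carrier)
  finally show ?thesis .
qed

lemma gate_mat_G1_anc_ctrl:
  "k \<in> {1,2} \<Longrightarrow> q < n \<Longrightarrow> A \<in> carrier_mat 2 2 \<Longrightarrow>
    gate_mat (n+2) (G1 q A) = anc_ctrl k (on_qubit n q A) (on_qubit n q A)"
  using on_qubit_compute kron_one4_eq_anc_ctrl by simp

lemma gate_mat_carrier: assumes "gate_ok N g" shows "gate_mat N g \<in> carrier_mat (2^N) (2^N)"
proof (cases g)
  case (CNOT c t)
  then have "on_qubit N c proj1 \<in> carrier_mat (2^N) (2^N)" "on_qubit N t pauliX \<in> carrier_mat (2^N) (2^N)"
    using assms by auto
  then show ?thesis unfolding CNOT gate_mat.simps by (intro add_carrier_mat mult_carrier_mat)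
qed (use assms in \<open>auto simp: unitary_mat_def\<close>)

lemma circuit_mat_carrier: "\<forall>g\<in>set gs. gate_ok N g \<Longrightarrow> circuit_mat N gs \<in> carrier_mat (2^N) (2^N)"
  by (induction gs) (auto intro!: mult_carrier_mat gate_mat_carrier)

lemma circuit_mat_single: "gate_ok N g \<Longrightarrow> circuit_mat N [g] = gate_mat N g"
  unfolding circuit_mat.simps by (rule left_mult_one_mat[OF gate_mat_carrier])

lemma circuit_mat_append:
  "\<forall>g\<in>set (xs @ ys). gate_ok N g \<Longrightarrow> circuit_mat N (xs @ ys) = circuit_mat N ys * circuit_mat N xs"
proof (induction xs)
  case Nil
  then show ?case using circuit_mat_carrier[of ys N] by simp
next
  case (Cons x xs)
  then have "circuit_mat N ys \<in> carrier_mat (2^N) (2^N)" "circuit_mat N xs \<in> carrier_mat (2^N) (2^N)"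
    "gate_mat N x \<in> carrier_mat (2^N) (2^N)"
    by (auto intro: circuit_mat_carrier gate_mat_carrier)
  with Cons show ?case by (simp add: carrier_matD)
qed

lemma cnot_count_append: "cnot_count (xs @ ys) = cnot_count xs + cnot_count ys"
  by (simp add: cnot_count_def)

lemma cnot_count_concat: "(\<And>q. cnot_count (gs q) = 1) \<Longrightarrow> cnot_count (concat (map gs [0..<m])) = m"
  by (induction m) (auto simp: cnot_count_append, simp add: cnot_count_def)

lemma on_qubit_mult_tensor_pow_prefix:
  assumes m: "m < n" and A: "A \<in> carrier_mat 2 2"
  shows "on_qubit n m A * kron (tensor_pow m A) (1\<^sub>m (2^(n-m)))
    = kron (tensor_pow (Suc m) A) (1\<^sub>m (2^(n - Suc m)))"
proof -
  have "n - m = Suc (n - Suc m)" using m by simp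
  then have "kron (tensor_pow m A) (1\<^sub>m (2^(n-m))) = kron (tensor_pow m A) (kron (1\<^sub>m 2) (1\<^sub>m (2^(n - Suc m))))"
    by (simp add: kron_one)
  then show ?thesis unfolding on_qubit_def using A by (simp add: kron_mult kron_assoc)
qed

lemma circuit_mat_ctrl_tensor_pow:
  assumes k: "k \<in> {1,2}" and A: "A \<in> carrier_mat 2 2"
    and gs: "\<And>q. q < n \<Longrightarrow> (\<forall>g\<in>set (gs q). gate_ok (n+2) g) \<and>
                  circuit_mat (n+2) (gs q) = anc_ctrl k (on_qubit n q A) (1\<^sub>m (2^n))"
    and "m \<le> n"
  shows "(\<forall>g\<in>set (concat (map gs [0..<m])). gate_ok (n+2) g) \<and>
    circuit_mat (n+2) (concat (map gs [0..<m])) = anc_ctrl k (kron (tensor_pow m A) (1\<^sub>m (2^(n-m)))) (1\<^sub>m (2^n))"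
  using \<open>m \<le> n\<close>
proof (induction m)
  case 0
  have "anc_ctrl k (1\<^sub>m (2^n)) (1\<^sub>m (2^n)) = kron (1\<^sub>m (2^n)) (1\<^sub>m 4)"
    by (rule kron_one4_eq_anc_ctrl[OF k, symmetric])
  also have "\<dots> = 1\<^sub>m (2^(n+2))" by (simp add: kron_one power_add mult.commute)
  finally show ?case by simp
next
  case (Suc m)
  then have m: "m < n" by simp
  from Suc.IH m have ok: "\<forall>g\<in>set (concat (map gs [0..<m])). gate_ok (n+2) g"
    and IH: "circuit_mat (n+2) (concat (map gs [0..<m])) = anc_ctrl k (kron (tensor_pow m A) (1\<^sub>m (2^(n-m)))) (1\<^sub>m (2^n))"
    by auto
  from gs[OF m] have ok': "\<forall>g\<in>set (concat (map gs [0..<m]) @ gs m). gate_ok (n+2) g"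
    and cm: "circuit_mat (n+2) (gs m) = anc_ctrl k (on_qubit n m A) (1\<^sub>m (2^n))" using ok by auto
  have "kron (tensor_pow m A) (1\<^sub>m (2^(n-m))) \<in> carrier_mat (2^m * 2^(n-m)) (2^m * 2^(n-m))"
    using A by (intro kron_carrier) auto
  moreover have "(2::nat)^m * 2^(n-m) = 2^n" using m by (simp flip: power_add)
  ultimately have T: "kron (tensor_pow m A) (1\<^sub>m (2^(n-m))) \<in> carrier_mat (2^n) (2^n)" by simp
  have "circuit_mat (n+2) (concat (map gs [0..<Suc m])) = circuit_mat (n+2) (gs m) * circuit_mat (n+2) (concat (map gs [0..<m]))"
    using circuit_mat_append[OF ok'] by simp
  also have "\<dots> = anc_ctrl k (on_qubit n m A * kron (tensor_pow m A) (1\<^sub>m (2^(n-m)))) (1\<^sub>m (2^n) * 1\<^sub>m (2^n))"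
    unfolding cm IH using k A m T by (intro anc_ctrl_mult) auto
  also have "\<dots> = anc_ctrl k (kron (tensor_pow (Suc m) A) (1\<^sub>m (2^(n - Suc m)))) (1\<^sub>m (2^n))"
    using on_qubit_mult_tensor_pow_prefix[OF m A] by simp
  finally show ?case using ok' by simp
qed

definition cx_gates :: "nat \<Rightarrow> nat \<Rightarrow> gate list" where
  "cx_gates n q = [CNOT n q]"

definition cy_gates :: "nat \<Rightarrow> nat \<Rightarrow> gate list" where
  "cy_gates n q = [G1 q (adj phase_gate), CNOT (n+1) q, G1 q phase_gate]"

lemma cx_gates: assumes "q < n"
  shows "(\<forall>g\<in>set (cx_gates n q). gate_ok (n+2) g) \<and>
    circuit_mat (n+2) (cx_gates n q) = anc_ctrl 1 (on_qubit n q pauliX) (1\<^sub>m (2^n))"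
  using assms gate_mat_CNOT_anc_ctrl[of 1 q n] circuit_mat_single[of "n+2" "CNOT n q"] by (simp add: cx_gates_def)

lemma cy_gates: assumes q: "q < n"
  shows "(\<forall>g\<in>set (cy_gates n q). gate_ok (n+2) g) \<and>
    circuit_mat (n+2) (cy_gates n q) = anc_ctrl 2 (on_qubit n q pauliY) (1\<^sub>m (2^n))"
proof
  show ok: "\<forall>g\<in>set (cy_gates n q). gate_ok (n+2) g"
    using q unitary_phase_gate unitary_adj[OF unitary_phase_gate] by (simp add: cy_gates_def)
  let ?S = "on_qubit n q phase_gate" let ?Sd = "on_qubit n q (adj phase_gate)" let ?X = "on_qubit n q pauliX"
  let ?I = "1\<^sub>m (2^n)"
  have S: "?S \<in> carrier_mat (2^n) (2^n)" and Sd: "?Sd \<in> carrier_mat (2^n) (2^n)"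
    and X: "?X \<in> carrier_mat (2^n) (2^n)" using q by auto
  have SSd: "?S * ?Sd = ?I"
    using q unitary_mult_adj[OF unitary_phase_gate] by (simp add: on_qubit_mult on_qubit_one)
  have "circuit_mat (n+2) (cy_gates n q)
      = gate_mat (n+2) (G1 q phase_gate) * gate_mat (n+2) (CNOT (n+1) q) * gate_mat (n+2) (G1 q (adj phase_gate))"
    using ok circuit_mat_single[of "n+2" "G1 q phase_gate"] by (simp add: cy_gates_def del: mult_assoc_dims)
  also have "\<dots> = anc_ctrl 2 ?S ?S * anc_ctrl 2 ?X ?I * anc_ctrl 2 ?Sd ?Sd"
    using q gate_mat_G1_anc_ctrl[of 2 q n phase_gate] gate_mat_G1_anc_ctrl[of 2 q n "adj phase_gate"]
      gate_mat_CNOT_anc_ctrl[of 2 q n] by simp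
  also have "\<dots> = anc_ctrl 2 (?S * ?X) (?S * ?I) * anc_ctrl 2 ?Sd ?Sd"
    using S X by (simp add: anc_ctrl_mult del: mult_assoc_dims)
  also have "\<dots> = anc_ctrl 2 (?S * ?X * ?Sd) (?S * ?I * ?Sd)"
    using S Sd X by (intro anc_ctrl_mult) auto
  also have "?S * ?X * ?Sd = on_qubit n q pauliY"
    using on_qubit_mult[OF mult_carrier_mat[OF phase_gate_carrier pauliX_carrier] adj_carrier[OF phase_gate_carrier]]
    by (simp add: on_qubit_mult phase_gate_conj_pauliX del: mult_assoc_dims)
  also have "?S * ?I * ?Sd = ?I" using S SSd by simp
  finally show "circuit_mat (n+2) (cy_gates n q) = anc_ctrl 2 (on_qubit n q pauliY) ?I" .
qed

section \<open>The two-ancilla sandwich\<close>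

lemma sum_lessThan_4: "(\<Sum>k\<in>{0..<4::nat}. f k) = f 0 + f 1 + f 2 + f 3"
  by (simp add: eval_nat_numeral)

lemma less_4_cases: "(i::nat) < 4 \<longleftrightarrow> i = 0 \<or> i = 1 \<or> i = 2 \<or> i = 3" by auto

lemma kron_one_column_sandwich:
  assumes A: "A \<in> carrier_mat d d" and v: "v \<in> carrier_mat m 1"
  shows "kron (1\<^sub>m d) v * A * kron (1\<^sub>m d) (adj v) = kron A (v * adj v)"
proof -
  have v1: "dim_col v = 1" "dim_row v = m" using v by auto
  have "kron (1\<^sub>m d) v * A = kron (1\<^sub>m d) v * kron A (1\<^sub>m 1)" by simp
  also have "\<dots> = kron A v" using A v1 by (subst kron_mult) auto
  finally show ?thesis using A v1 by (simp add: kron_mult)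
qed

definition anc_ket :: "nat \<Rightarrow> complex mat" where
  "anc_ket s = mat 4 1 (\<lambda>(i,j). if i = s then 1 else 0)"

definition anc_plus :: "complex mat" where
  "anc_plus = mat 4 1 (\<lambda>_. 1/2)"

text \<open>Ancilla 1 is the more significant bit of the basis index \<open>s < 4\<close>.\<close>
definition anc_bit :: "nat \<Rightarrow> nat \<Rightarrow> bool" where
  "anc_bit k s = (if k = 1 then 2 \<le> s else odd s)"

lemma anc_ket_carrier[simp]: "anc_ket s \<in> carrier_mat 4 1" by (simp add: anc_ket_def)
lemma anc_ket_dims[simp]: "dim_row (anc_ket s) = 4" "dim_col (anc_ket s) = 1" by (auto simp: anc_ket_def)
lemma anc_plus_carrier[simp]: "anc_plus \<in> carrier_mat 4 1" by (simp add: anc_plus_def)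
lemma anc_plus_dims[simp]: "dim_row anc_plus = 4" "dim_col anc_plus = 1" by (auto simp: anc_plus_def)
lemma anc_zero_carrier[simp]: "anc_zero 2 \<in> carrier_mat 4 4" by (simp add: anc_zero_def)
lemma anc_zero_dims[simp]: "dim_row (anc_zero 2) = 4" "dim_col (anc_zero 2) = 4" by (auto simp: anc_zero_def)

lemma anc_zero_eq: "anc_zero 2 = anc_ket 0 * adj (anc_ket 0)"
  by (rule eq_matI) (auto simp: anc_ket_def anc_zero_def scalar_prod_def)

lemma anc_zero_idem: "anc_zero 2 * anc_zero 2 = anc_zero 2"
  by (rule eq_matI) (auto simp: anc_zero_def scalar_prod_def sum_lessThan_4)

lemma adj_anc_zero: "adj (anc_zero 2) = anc_zero 2"
  by (rule eq_matI) (auto simp: anc_zero_def)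

lemma anc_plus_eq: "anc_plus = (1/2) \<cdot>\<^sub>m (anc_ket 0 + anc_ket 1 + anc_ket 2 + anc_ket 3)"
  by (rule eq_matI) (auto simp: anc_ket_def anc_plus_def less_4_cases)

lemma adj_anc_plus_mult_anc_ket: "s < 4 \<Longrightarrow> adj anc_plus * anc_ket s = (1/2) \<cdot>\<^sub>m 1\<^sub>m 1"
  by (rule eq_matI) (auto simp: anc_ket_def anc_plus_def scalar_prod_def sum_lessThan_4 less_4_cases)

lemma inv_sqrt2_squared: "1 / complex_of_real (sqrt 2) * (1 / complex_of_real (sqrt 2)) = 1/2"
  by (simp flip: of_real_mult)

lemma two_div_sqrt2: "2 / complex_of_real (sqrt 2) = complex_of_real (sqrt 2)"
  by (simp add: field_simps flip: of_real_mult)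

lemma hadamard_carrier[simp]: "hadamard \<in> carrier_mat 2 2" by (simp add: hadamard_def)

lemma hpow2_eq: "hpow 2 = kron hadamard hadamard"
  by (simp add: numeral_2_eq_2)

lemma hpow2_carrier[simp]: "hpow 2 \<in> carrier_mat 4 4"
  unfolding hpow2_eq using kron_carrier[OF hadamard_carrier hadamard_carrier] by simp

lemma hpow2_dims[simp]: "dim_row (hpow 2) = 4" "dim_col (hpow 2) = 4"
  using hpow2_carrier by (auto simp del: hpow2_carrier)

lemma hpow2_index: "i < 4 \<Longrightarrow> j < 4 \<Longrightarrow>
    hpow 2 $$ (i,j) = hadamard $$ (i div 2, j div 2) * hadamard $$ (i mod 2, j mod 2)"
  unfolding hpow2_eq by (simp add: kron_index hadamard_def)

lemma anc_zero_mult_hpow2: "anc_zero 2 * hpow 2 = anc_ket 0 * adj anc_plus"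
proof (rule eq_matI)
  fix i j assume "i < dim_row (anc_ket 0 * adj anc_plus)" "j < dim_col (anc_ket 0 * adj anc_plus)"
  then have i: "i < 4" and j: "j < 4" by auto
  have "(anc_zero 2 * hpow 2) $$ (i,j) = (if i = 0 then hpow 2 $$ (0,j) else 0)"
    using i j by (simp add: scalar_prod_def sum_lessThan_4 anc_zero_def)
  also have "\<dots> = (anc_ket 0 * adj anc_plus) $$ (i,j)"
    using i j by (auto simp: hpow2_index anc_ket_def anc_plus_def scalar_prod_def hadamard_def
        inv_sqrt2_squared two_div_sqrt2 less_4_cases)
  finally show "(anc_zero 2 * hpow 2) $$ (i,j) = (anc_ket 0 * adj anc_plus) $$ (i,j)" .
qed auto

lemma hpow2_mult_anc_zero: "hpow 2 * anc_zero 2 = anc_plus * adj (anc_ket 0)"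
proof (rule eq_matI)
  fix i j assume "i < dim_row (anc_plus * adj (anc_ket 0))" "j < dim_col (anc_plus * adj (anc_ket 0))"
  then have i: "i < 4" and j: "j < 4" by auto
  have "(hpow 2 * anc_zero 2) $$ (i,j) = (if j = 0 then hpow 2 $$ (i,0) else 0)"
    using i j by (simp add: scalar_prod_def sum_lessThan_4 anc_zero_def)
  also have "\<dots> = (anc_plus * adj (anc_ket 0)) $$ (i,j)"
    using i j by (auto simp: hpow2_index anc_ket_def anc_plus_def scalar_prod_def hadamard_def
        inv_sqrt2_squared two_div_sqrt2 less_4_cases)
  finally show "(hpow 2 * anc_zero 2) $$ (i,j) = (anc_plus * adj (anc_ket 0)) $$ (i,j)" .
qed auto

lemma on_qubit2_proj:
  assumes "k \<in> {1,2}"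
  shows "on_qubit 2 (k - 1) proj1 = diag_matrix 4 (\<lambda>i. if anc_bit k i then 1 else 0)"
    "on_qubit 2 (k - 1) proj0 = diag_matrix 4 (\<lambda>i. if anc_bit k i then 0 else 1)"
  using assms by (auto simp: on_qubit_def anc_bit_def kron_index proj0_def proj1_def less_4_cases
      intro!: eq_matI)

lemma diag_matrix_mult_anc_ket: "s < 4 \<Longrightarrow> diag_matrix 4 f * anc_ket s = f s \<cdot>\<^sub>m anc_ket s"
  by (rule eq_matI) (auto simp: anc_ket_def scalar_prod_def atLeast0LessThan)

lemma anc_ctrl_mult_kron_anc_ket:
  assumes k: "k \<in> {1,2}" and s: "s < 4" and A: "A \<in> carrier_mat d d" and B: "B \<in> carrier_mat d d"
    and M: "M \<in> carrier_mat d e"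
  shows "anc_ctrl k A B * kron M (anc_ket s) = kron ((if anc_bit k s then A else B) * M) (anc_ket s)"
proof -
  let ?p1 = "on_qubit 2 (k - 1) proj1" let ?p0 = "on_qubit 2 (k - 1) proj0"
  have X: "kron A ?p1 \<in> carrier_mat (d*4) (d*4)" "kron B ?p0 \<in> carrier_mat (d*4) (d*4)"
    unfolding on_qubit2_proj[OF k] using A B by (auto intro!: kron_carrier)
  have Z: "kron M (anc_ket s) \<in> carrier_mat (d*4) (e*1)" using M by (intro kron_carrier) auto
  have "anc_ctrl k A B * kron M (anc_ket s) = kron A ?p1 * kron M (anc_ket s) + kron B ?p0 * kron M (anc_ket s)"
    unfolding anc_ctrl_def by (rule add_mult_distrib_mat[OF X Z])
  also have "\<dots> = kron (A * M) (?p1 * anc_ket s) + kron (B * M) (?p0 * anc_ket s)"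
    using A B M unfolding on_qubit2_proj[OF k] by (simp add: kron_mult)
  also have "\<dots> = kron ((if anc_bit k s then A else B) * M) (anc_ket s)"
    unfolding on_qubit2_proj[OF k] diag_matrix_mult_anc_ket[OF s] using A B M
    by (cases "anc_bit k s") (auto simp: kron_smult_right kron_zero_right intro!: eq_matI)
  finally show ?thesis .
qed

lemma mult_smult_add4:
  fixes M :: "complex mat"
  assumes M: "M \<in> carrier_mat a b" and X: "X0 \<in> carrier_mat b e" "X1 \<in> carrier_mat b e"
    "X2 \<in> carrier_mat b e" "X3 \<in> carrier_mat b e"
  shows "M * (c \<cdot>\<^sub>m (X0 + X1 + X2 + X3)) = c \<cdot>\<^sub>m (M * X0 + M * X1 + M * X2 + M * X3)"
proof -
  have "M * (c \<cdot>\<^sub>m (X0 + X1 + X2 + X3)) = c \<cdot>\<^sub>m (M * (X0 + X1 + X2 + X3))"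
    using assms by (intro mult_smult_distrib) auto
  also have "M * (X0 + X1 + X2 + X3) = M * (X0 + X1 + X2) + M * X3"
    using assms by (intro mult_add_distrib_mat) auto
  also have "M * (X0 + X1 + X2) = M * (X0 + X1) + M * X2"
    using assms by (intro mult_add_distrib_mat) auto
  also have "M * (X0 + X1) = M * X0 + M * X1"
    using assms by (intro mult_add_distrib_mat) auto
  finally show ?thesis .
qed

lemma kron_one4_mult_kron_anc_ket:
  "A \<in> carrier_mat d d \<Longrightarrow> M \<in> carrier_mat d e \<Longrightarrow> kron A (1\<^sub>m 4) * kron M (anc_ket s) = kron (A * M) (anc_ket s)"
  by (simp add: kron_mult)

lemma layer1_full_2:
  assumes "C 1 \<in> carrier_mat (2^n) (2^n)" "C 2 \<in> carrier_mat (2^n) (2^n)"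
  shows "layer1_full n 2 C = anc_ctrl 1 (C 1) (1\<^sub>m (2^n)) * anc_ctrl 2 (C 2) (1\<^sub>m (2^n))"
proof -
  have "[1..<Suc 2] = [1,2]" by (simp add: upt_rec)
  then show ?thesis unfolding layer1_full_def using assms by (simp add: ctrl_eq_anc_ctrl)
qed

lemma layer2_full_2:
  assumes "C 1 \<in> carrier_mat (2^n) (2^n)" "C 2 \<in> carrier_mat (2^n) (2^n)"
  shows "layer2_full n 2 C = anc_ctrl 2 (C 2) (1\<^sub>m (2^n)) * anc_ctrl 1 (C 1) (1\<^sub>m (2^n))"
proof -
  have "[1..<Suc 2] = [1,2]" by (simp add: upt_rec)
  then show ?thesis unfolding layer2_full_def using assms by (simp add: ctrl_eq_anc_ctrl)
qed

lemma layer1_full_carrier: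
  "C 1 \<in> carrier_mat (2^n) (2^n) \<Longrightarrow> C 2 \<in> carrier_mat (2^n) (2^n) \<Longrightarrow>
    layer1_full n 2 C \<in> carrier_mat (2^n*4) (2^n*4)"
  by (simp add: layer1_full_2 mult_carrier_mat[of _ _ "2^n*4"])

lemma layer2_full_carrier:
  "C 1 \<in> carrier_mat (2^n) (2^n) \<Longrightarrow> C 2 \<in> carrier_mat (2^n) (2^n) \<Longrightarrow>
    layer2_full n 2 C \<in> carrier_mat (2^n*4) (2^n*4)"
  by (simp add: layer2_full_2 mult_carrier_mat[of _ _ "2^n*4"])

definition branch_op :: "nat \<Rightarrow> (nat \<Rightarrow> complex mat) \<Rightarrow> nat \<Rightarrow> nat \<Rightarrow> complex mat" where
  "branch_op n C k s = (if anc_bit k s then C k else 1\<^sub>m (2^n))"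

lemma branch_op_carrier[simp]: "C k \<in> carrier_mat (2^n) (2^n) \<Longrightarrow> branch_op n C k s \<in> carrier_mat (2^n) (2^n)"
  by (simp add: branch_op_def)

lemma branch_op_dims[simp]: "C k \<in> carrier_mat (2^n) (2^n) \<Longrightarrow> dim_row (branch_op n C k s) = 2^n"
  "C k \<in> carrier_mat (2^n) (2^n) \<Longrightarrow> dim_col (branch_op n C k s) = 2^n"
  by (auto simp: branch_op_def)

text \<open>The operator that the sandwich applies to the compute register in the ancilla branch \<open>|s\<rangle>\<close>.\<close>
definition branch_sandwich :: "nat \<Rightarrow> (nat \<Rightarrow> complex mat) \<Rightarrow> (nat \<Rightarrow> complex mat) \<Rightarrow> complex mat \<Rightarrow> complex mat
    \<Rightarrow> nat \<Rightarrow> complex mat" where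
  "branch_sandwich n C1 C2 E U s =
     branch_op n C2 2 s * branch_op n C2 1 s * E * U * branch_op n C1 1 s * branch_op n C1 2 s"

text \<open>A Kraus operator \<open>E\<close> of the noise, seen through the whole protocol and the projection onto
  the accepted ancilla state \<open>|00\<rangle>\<close>.\<close>
definition sandwich_kraus :: "nat \<Rightarrow> (nat \<Rightarrow> complex mat) \<Rightarrow> (nat \<Rightarrow> complex mat) \<Rightarrow> complex mat
    \<Rightarrow> complex mat \<Rightarrow> complex mat" where
  "sandwich_kraus n C1 C2 U E =
    kron (1\<^sub>m (2^n)) (anc_zero 2) * (kron (1\<^sub>m (2^n)) (hpow 2) * layer2_full n 2 C2) * kron E (1\<^sub>m 4) *
    (kron U (1\<^sub>m 4) * layer1_full n 2 C1 * kron (1\<^sub>m (2^n)) (hpow 2) * kron (1\<^sub>m (2^n)) (anc_zero 2))"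

locale two_checks =
  fixes n :: nat and C1 C2 :: "nat \<Rightarrow> complex mat" and E U :: "complex mat"
  assumes C1: "C1 1 \<in> carrier_mat (2^n) (2^n)" "C1 2 \<in> carrier_mat (2^n) (2^n)"
    and C2: "C2 1 \<in> carrier_mat (2^n) (2^n)" "C2 2 \<in> carrier_mat (2^n) (2^n)"
    and E: "E \<in> carrier_mat (2^n) (2^n)" and U: "U \<in> carrier_mat (2^n) (2^n)"
begin

lemma branch_sandwich_carrier[simp]: "branch_sandwich n C1 C2 E U s \<in> carrier_mat (2^n) (2^n)"
  unfolding branch_sandwich_def carrier_mat_def using C1 C2 E U by simp

lemma layers_mult_kron_anc_ket:
  assumes s: "s < 4"
  shows "layer2_full n 2 C2 * kron E (1\<^sub>m 4) * kron U (1\<^sub>m 4) * layer1_full n 2 C1 * kron (1\<^sub>m (2^n)) (anc_ket s)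
    = kron (branch_sandwich n C1 C2 E U s) (anc_ket s)"
proof -
  let ?I = "1\<^sub>m (2^n)" let ?b = "\<lambda>C k. branch_op n C k s"
  note ket = anc_ctrl_mult_kron_anc_ket[OF _ s, where d = "2^n" and e = "2^n"]
  have b: "?b C1 1 \<in> carrier_mat (2^n) (2^n)" "?b C1 2 \<in> carrier_mat (2^n) (2^n)"
    "?b C2 1 \<in> carrier_mat (2^n) (2^n)" "?b C2 2 \<in> carrier_mat (2^n) (2^n)"
    using C1 C2 by auto
  have "layer2_full n 2 C2 * kron E (1\<^sub>m 4) * kron U (1\<^sub>m 4) * layer1_full n 2 C1 * kron ?I (anc_ket s)
      = layer2_full n 2 C2 * (kron E (1\<^sub>m 4) * (kron U (1\<^sub>m 4) * (layer1_full n 2 C1 * kron ?I (anc_ket s))))"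
    using layer1_full_carrier[OF C1] layer2_full_carrier[OF C2] E U by (simp add: carrier_matD)
  also have "layer1_full n 2 C1 * kron ?I (anc_ket s) = kron (?b C1 1 * ?b C1 2) (anc_ket s)"
    unfolding layer1_full_2[OF C1] using C1 b
    by (simp add: ket branch_op_def)
  also have "kron E (1\<^sub>m 4) * (kron U (1\<^sub>m 4) * kron (?b C1 1 * ?b C1 2) (anc_ket s))
      = kron (E * (U * (?b C1 1 * ?b C1 2))) (anc_ket s)"
  proof -
    have P: "?b C1 1 * ?b C1 2 \<in> carrier_mat (2^n) (2^n)" using b by (intro mult_carrier_mat)
    show ?thesis using kron_one4_mult_kron_anc_ket[OF U P] kron_one4_mult_kron_anc_ket[OF E mult_carrier_mat[OF U P]]
      by (simp del: mult_assoc_dims)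
  qed
  also have "layer2_full n 2 C2 * kron (E * (U * (?b C1 1 * ?b C1 2))) (anc_ket s)
      = kron (?b C2 2 * (?b C2 1 * (E * (U * (?b C1 1 * ?b C1 2))))) (anc_ket s)"
    unfolding layer2_full_2[OF C2] using C2 E U b
    by (simp add: ket branch_op_def)
  finally show ?thesis using E U b by (simp add: branch_sandwich_def)
qed

definition postselected_op :: "complex mat" where
  "postselected_op = (1/4) \<cdot>\<^sub>m (branch_sandwich n C1 C2 E U 0 + branch_sandwich n C1 C2 E U 1
     + branch_sandwich n C1 C2 E U 2 + branch_sandwich n C1 C2 E U 3)"

lemma postselected_op_carrier[simp]: "postselected_op \<in> carrier_mat (2^n) (2^n)"
  by (simp add: postselected_op_def)

lemma sandwich_between_anc_plus:
  "kron (1\<^sub>m (2^n)) (adj anc_plus) * (layer2_full n 2 C2 * kron E (1\<^sub>m 4) * kron U (1\<^sub>m 4) * layer1_full n 2 C1)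
     * kron (1\<^sub>m (2^n)) anc_plus = postselected_op"
proof -
  let ?I = "1\<^sub>m (2^n)" let ?Z = "branch_sandwich n C1 C2 E U"
  define M where "M = layer2_full n 2 C2 * kron E (1\<^sub>m 4) * kron U (1\<^sub>m 4) * layer1_full n 2 C1"
  have M: "M \<in> carrier_mat (2^n*4) (2^n*4)"
    unfolding M_def using layer1_full_carrier[OF C1] layer2_full_carrier[OF C2] E U by (intro mult_carrier_mat) auto
  have K: "kron ?I (anc_ket s) \<in> carrier_mat (2^n*4) (2^n)" for s
    using kron_carrier[OF one_carrier_mat anc_ket_carrier, of "2^n" s] by simp
  have ZK: "kron (?Z s) (anc_ket s) \<in> carrier_mat (2^n*4) (2^n)" for s
    using kron_carrier[OF branch_sandwich_carrier anc_ket_carrier, of s s] by simp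
  have Pl: "kron ?I (adj anc_plus) \<in> carrier_mat (2^n) (2^n*4)"
    using kron_carrier[OF one_carrier_mat adj_carrier[OF anc_plus_carrier], of "2^n"] by simp
  have MK: "M * kron ?I (anc_ket s) = kron (?Z s) (anc_ket s)" if "s < 4" for s
    using layers_mult_kron_anc_ket[OF that] layer1_full_carrier[OF C1] layer2_full_carrier[OF C2] E U K[of s]
    unfolding M_def by (simp add: carrier_matD)
  have PZ: "kron ?I (adj anc_plus) * kron (?Z s) (anc_ket s) = (1/2) \<cdot>\<^sub>m ?Z s" if "s < 4" for s
    using that carrier_matD[OF branch_sandwich_carrier]
    by (simp add: kron_mult adj_anc_plus_mult_anc_ket kron_smult_right)
  have "kron ?I anc_plus = (1/2) \<cdot>\<^sub>m (kron ?I (anc_ket 0) + kron ?I (anc_ket 1) + kron ?I (anc_ket 2) + kron ?I (anc_ket 3))"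
    unfolding anc_plus_eq by (simp add: kron_smult_right kron_add_right)
  then have "M * kron ?I anc_plus = (1/2) \<cdot>\<^sub>m (kron (?Z 0) (anc_ket 0) + kron (?Z 1) (anc_ket 1) + kron (?Z 2) (anc_ket 2) + kron (?Z 3) (anc_ket 3))"
    using mult_smult_add4[OF M K K K K] by (simp add: MK)
  then have "kron ?I (adj anc_plus) * (M * kron ?I anc_plus) = (1/2) \<cdot>\<^sub>m ((1/2) \<cdot>\<^sub>m ?Z 0 + (1/2) \<cdot>\<^sub>m ?Z 1 + (1/2) \<cdot>\<^sub>m ?Z 2 + (1/2) \<cdot>\<^sub>m ?Z 3)"
    using mult_smult_add4[OF Pl ZK ZK ZK ZK] by (simp add: PZ)
  also have "\<dots> = postselected_op"
    unfolding postselected_op_def by (rule eq_matI) (simp_all add: carrier_matD[OF branch_sandwich_carrier])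
  finally show ?thesis
    unfolding M_def[symmetric] using assoc_mult_mat[OF Pl M kron_carrier[OF one_carrier_mat anc_plus_carrier]]
    by simp
qed

lemma sandwich_kraus_eq: "sandwich_kraus n C1 C2 U E = kron postselected_op (anc_zero 2)"
proof -
  let ?I = "1\<^sub>m (2^n)"
  define P where "P = kron ?I (anc_zero 2)"
  define H where "H = kron ?I (hpow 2)"
  define M where "M = layer2_full n 2 C2 * kron E (1\<^sub>m 4) * kron U (1\<^sub>m 4) * layer1_full n 2 C1"
  have M: "M \<in> carrier_mat (2^n*4) (2^n*4)"
    unfolding M_def using layer1_full_carrier[OF C1] layer2_full_carrier[OF C2] E U by (intro mult_carrier_mat) auto
  have PH: "P * H = kron ?I (anc_ket 0) * kron ?I (adj anc_plus)"
    unfolding P_def H_def by (simp add: kron_mult anc_zero_mult_hpow2)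
  have HP: "H * P = kron ?I anc_plus * kron ?I (adj (anc_ket 0))"
    unfolding P_def H_def by (simp add: kron_mult hpow2_mult_anc_zero)
  have "sandwich_kraus n C1 C2 U E = (P * H) * M * (H * P)"
    using layer1_full_carrier[OF C1] layer2_full_carrier[OF C2] E U unfolding sandwich_kraus_def M_def P_def H_def
    by (simp add: carrier_matD)
  also have "\<dots> = kron ?I (anc_ket 0) * (kron ?I (adj anc_plus) * M * kron ?I anc_plus) * kron ?I (adj (anc_ket 0))"
    unfolding PH HP using M by (simp add: carrier_matD)
  also have "\<dots> = kron postselected_op (anc_zero 2)"
    unfolding M_def sandwich_between_anc_plus anc_zero_eq
    by (rule kron_one_column_sandwich[OF postselected_op_carrier anc_ket_carrier])
  finally show ?thesis .
qed

end

section \<open>The checks \<open>X\<^sup>\<otimes>\<^sup>n\<close> and \<open>Y\<^sup>\<otimes>\<^sup>n\<close>\<close>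

definition checks :: "nat \<Rightarrow> nat \<Rightarrow> complex mat" where
  "checks n k = (if k = 1 then tensor_pow n pauliX else tensor_pow n pauliY)"

definition pre_checks :: "nat \<Rightarrow> complex mat \<Rightarrow> nat \<Rightarrow> complex mat" where
  "pre_checks n U k = adj U * adj (checks n k) * U"

lemma unitary_checks: "unitary_mat (2^n) (checks n k)"
  unfolding checks_def using unitary_tensor_pow[OF unitary_pauliX] unitary_tensor_pow[OF unitary_pauliY] by simp

lemma checks_carrier[simp]: "checks n k \<in> carrier_mat (2^n) (2^n)"
  using unitary_checks unitary_carrier by blast

lemma checks_dims[simp]: "dim_row (checks n k) = 2^n" "dim_col (checks n k) = 2^n"
  using checks_carrier[of n k] by (auto simp del: checks_carrier)

lemma unitary_pre_checks: "unitary_mat (2^n) U \<Longrightarrow> unitary_mat (2^n) (pre_checks n U k)"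
  unfolding pre_checks_def by (intro unitary_mult unitary_adj unitary_checks)

lemma pre_checks_carrier[simp]: "U \<in> carrier_mat (2^n) (2^n) \<Longrightarrow> pre_checks n U k \<in> carrier_mat (2^n) (2^n)"
  unfolding pre_checks_def by (intro mult_carrier_mat adj_carrier checks_carrier) auto

lemma checks_mult_mult_pre_checks:
  assumes "unitary_mat (2^n) U" shows "checks n k * U * pre_checks n U k = U"
  using assms unitary_carrier[OF assms] unitary_checks[of n k]
  by (simp add: pre_checks_def unitary_mult_adj_cancel unitary_mult_adj)

lemma branch_sandwich_checks:
  fixes s :: nat
  assumes uU: "unitary_mat (2^n) U" and E: "E \<in> carrier_mat (2^n) (2^n)"
  defines "V \<equiv> branch_op n (checks n) 2 s * branch_op n (checks n) 1 s"
  shows "branch_sandwich n (pre_checks n U) (checks n) E U s = V * E * adj V * U"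
proof -
  have U: "U \<in> carrier_mat (2^n) (2^n)" using uU by (rule unitary_carrier)
  have c: "U * (adj U * X) = X" if "dim_row X = 2^n" for X by (rule unitary_mult_adj_cancel[OF uU that])
  show ?thesis
    unfolding V_def branch_sandwich_def branch_op_def pre_checks_def using U E
    by (cases "anc_bit 1 s"; cases "anc_bit 2 s") (simp_all add: c adj_mult)
qed

lemma postselected_op_weight_one:
  assumes uU: "unitary_mat (2^n) U" and q: "q < n" and A: "A \<in> carrier_mat 2 2"
  shows "two_checks.postselected_op n (pre_checks n U) (checks n) (on_qubit n q A) U
    = ((A $$ (0,0) + A $$ (1,1)) / 2) \<cdot>\<^sub>m U"
proof -
  let ?E = "on_qubit n q A" let ?d = "2^n"
  let ?X = "tensor_pow n pauliX" let ?Y = "tensor_pow n pauliY"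
  have U: "U \<in> carrier_mat ?d ?d" using uU by (rule unitary_carrier)
  have E: "?E \<in> carrier_mat ?d ?d" using A q by simp
  interpret two_checks n "pre_checks n U" "checks n" ?E U
    using U E by unfold_locales auto
  let ?Z = "branch_sandwich n (pre_checks n U) (checks n) ?E U"
  have X: "?X \<in> carrier_mat ?d ?d" and Y: "?Y \<in> carrier_mat ?d ?d" by auto
  have bits: "\<not> anc_bit 1 0" "\<not> anc_bit 2 0" "\<not> anc_bit 1 1" "anc_bit 2 1"
    "anc_bit 1 2" "\<not> anc_bit 2 2" "anc_bit 1 3" "anc_bit 2 3"
    by (simp_all add: anc_bit_def)
  let ?M1 = "?X * ?E * adj ?X" let ?M2 = "?Y * ?E * adj ?Y" let ?M3 = "?Y * ?M1 * adj ?Y"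
  have Z: "?Z 0 = ?E * U" "?Z 1 = ?M2 * U" "?Z 2 = ?M1 * U" "?Z 3 = ?M3 * U"
    using branch_sandwich_checks[OF uU E] bits X Y E U
    by (simp_all add: branch_op_def checks_def adj_mult)
  have M1: "?M1 = on_qubit n q (pauliX * A * adj pauliX)"
    by (rule tensor_pow_conj_on_qubit[OF q A unitary_pauliX])
  have M2: "?M2 = on_qubit n q (pauliY * A * adj pauliY)"
    by (rule tensor_pow_conj_on_qubit[OF q A unitary_pauliY])
  have XA: "pauliX * A * adj pauliX \<in> carrier_mat 2 2" and YA: "pauliY * A * adj pauliY \<in> carrier_mat 2 2"
    using A by (meson mult_carrier_mat adj_carrier pauliX_carrier pauliY_carrier)+
  have YXA: "pauliY * (pauliX * A * adj pauliX) * adj pauliY \<in> carrier_mat 2 2"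
    using XA by (meson mult_carrier_mat adj_carrier pauliY_carrier)
  have M3: "?Y * on_qubit n q (pauliX * A * adj pauliX) * adj ?Y
      = on_qubit n q (pauliY * (pauliX * A * adj pauliX) * adj pauliY)"
    by (rule tensor_pow_conj_on_qubit[OF q XA unitary_pauliY])
  have c: "?M1 \<in> carrier_mat ?d ?d" "?M2 \<in> carrier_mat ?d ?d" "?M3 \<in> carrier_mat ?d ?d"
    unfolding M1 M2 M3 using XA YA YXA q by auto
  have "?E + ?M1 + ?M2 + ?M3 = on_qubit n q (A + pauliX * A * adj pauliX + pauliY * A * adj pauliY
      + pauliY * (pauliX * A * adj pauliX) * adj pauliY)"
    unfolding M1 M2 M3 using A XA YA YXA by (simp add: on_qubit_add del: mult_assoc_dims)
  also have "\<dots> = (2 * (A $$ (0,0) + A $$ (1,1))) \<cdot>\<^sub>m 1\<^sub>m ?d"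
    unfolding pauli_twirl[OF A] on_qubit_smult on_qubit_one[OF q] ..
  finally have twirl: "?E + ?M1 + ?M2 + ?M3 = (2 * (A $$ (0,0) + A $$ (1,1))) \<cdot>\<^sub>m 1\<^sub>m ?d" .
  have "postselected_op = (1/4) \<cdot>\<^sub>m ((?E + ?M1 + ?M2 + ?M3) * U)"
    unfolding postselected_op_def Z using E c U
    by (intro eq_matI) (auto simp: algebra_simps scalar_prod_def sum.distrib)
  then show ?thesis unfolding twirl using U by (intro eq_matI) (auto simp: algebra_simps)
qed

lemma apply_kraus_carrier:
  "\<forall>E\<in>set Ks. E \<in> carrier_mat d d \<Longrightarrow> \<sigma> \<in> carrier_mat d d \<Longrightarrow> apply_kraus Ks \<sigma> \<in> carrier_mat d d"
  unfolding apply_kraus_def by (induction Ks) auto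

lemma apply_kraus_sandwich:
  assumes A: "A \<in> carrier_mat d d" and B: "B \<in> carrier_mat d d" and \<sigma>: "\<sigma> \<in> carrier_mat d d"
    and Ks: "\<forall>E\<in>set Ks. E \<in> carrier_mat d d"
  shows "A * apply_kraus Ks (B * \<sigma> * adj B) * adj A = apply_kraus (map (\<lambda>E. A * E * B) Ks) \<sigma>"
  using Ks
proof (induction Ks)
  case Nil
  then show ?case using A B \<sigma> by (simp add: apply_kraus_def)
next
  case (Cons E Ks)
  let ?\<tau> = "B * \<sigma> * adj B"
  have \<tau>: "?\<tau> \<in> carrier_mat d d" and E: "E \<in> carrier_mat d d" using B \<sigma> Cons.prems by auto
  have R: "apply_kraus Ks ?\<tau> \<in> carrier_mat d d" using apply_kraus_carrier Cons.prems \<tau> by simp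
  have T: "E * ?\<tau> * adj E \<in> carrier_mat d d" using E \<tau> by auto
  have "A * apply_kraus (E # Ks) ?\<tau> * adj A = A * (E * ?\<tau> * adj E) * adj A + A * apply_kraus Ks ?\<tau> * adj A"
  proof -
    have "apply_kraus (E # Ks) ?\<tau> = E * ?\<tau> * adj E + apply_kraus Ks ?\<tau>"
      using B by (simp add: apply_kraus_def)
    then show ?thesis
      by (simp add: mult_add_distrib_mat[OF A T R] del: mult_assoc_dims)
        (rule add_mult_distrib_mat[OF mult_carrier_mat[OF A T] mult_carrier_mat[OF A R] adj_carrier[OF A]])
  qed
  also have "A * (E * ?\<tau> * adj E) * adj A = (A * E * B) * \<sigma> * adj (A * E * B)"
    using A B E \<sigma> by (simp add: adj_mult)
  finally show ?case using Cons \<sigma> by (simp add: apply_kraus_def)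
qed

lemma apply_kraus_scalar_multiples:
  assumes "\<forall>E\<in>set Ks. f E * \<sigma> * adj (f E) = c E \<cdot>\<^sub>m S" and "S \<in> carrier_mat (dim_row \<sigma>) (dim_col \<sigma>)"
  shows "apply_kraus (map f Ks) \<sigma> = sum_list (map c Ks) \<cdot>\<^sub>m S"
  using assms(1) unfolding apply_kraus_def
proof (induction Ks)
  case Nil
  then show ?case using assms(2) by (auto intro!: eq_matI)
next
  case (Cons E Ks)
  then show ?case using assms(2) by (simp add: add_smult_distrib_right_mat)
qed

lemma projector_sandwich_reassoc:
  assumes P: "P \<in> carrier_mat d d" and V: "V \<in> carrier_mat d d" and W: "W \<in> carrier_mat d d"
    and \<sigma>: "\<sigma> \<in> carrier_mat d d" and X: "X \<in> carrier_mat d d"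
    and adjP: "adj P = P" and P\<sigma>: "P * \<sigma> * P = \<sigma>"
  shows "V * \<sigma> * adj V = (V * P) * \<sigma> * adj (V * P)"
    and "P * (W * X * adj W) * P = (P * W) * X * adj (P * W)"
proof -
  have "(V * P) * \<sigma> * adj (V * P) = V * (P * \<sigma> * P) * adj V"
    using P V \<sigma> by (simp add: adj_mult adjP)
  then show "V * \<sigma> * adj V = (V * P) * \<sigma> * adj (V * P)" by (simp add: P\<sigma>)
  show "P * (W * X * adj W) * P = (P * W) * X * adj (P * W)"
    using P W X by (simp add: adj_mult adjP)
qed

lemma smult_conj_smult:
  assumes U: "U \<in> carrier_mat d d" and \<rho>: "\<rho> \<in> carrier_mat d d"
  shows "(t \<cdot>\<^sub>m U) * \<rho> * adj (t \<cdot>\<^sub>m U) = (t * cnj t) \<cdot>\<^sub>m (U * \<rho> * adj U)"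
proof -
  have U\<rho>: "U * \<rho> \<in> carrier_mat d d" and aU: "adj U \<in> carrier_mat d d" using U \<rho> by auto
  have "(t \<cdot>\<^sub>m U) * \<rho> * adj (t \<cdot>\<^sub>m U) = t \<cdot>\<^sub>m ((U * \<rho>) * (cnj t \<cdot>\<^sub>m adj U))"
    unfolding adj_smult mult_smult_assoc_mat[OF U \<rho>]
    using mult_smult_assoc_mat[OF U\<rho> smult_carrier_mat[OF aU]] .
  also have "\<dots> = (t * cnj t) \<cdot>\<^sub>m (U * \<rho> * adj U)"
    unfolding mult_smult_distrib[OF U\<rho> aU] by (rule eq_matI) auto
  finally show ?thesis .
qed

lemma psp_final_2_eq_apply_kraus:
  assumes C1: "C1 1 \<in> carrier_mat (2^n) (2^n)" "C1 2 \<in> carrier_mat (2^n) (2^n)"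
    and C2: "C2 1 \<in> carrier_mat (2^n) (2^n)" "C2 2 \<in> carrier_mat (2^n) (2^n)"
    and U: "U \<in> carrier_mat (2^n) (2^n)" and \<rho>: "\<rho> \<in> carrier_mat (2^n) (2^n)"
    and Ks: "\<forall>E \<in> set Ks. E \<in> carrier_mat (2^n) (2^n)"
  shows "psp_final n 2 C1 C2 U Ks \<rho> = apply_kraus (map (sandwich_kraus n C1 C2 U) Ks) (kron \<rho> (anc_zero 2))"
proof -
  let ?d = "2^n" let ?D = "2^n * 4" let ?I = "1\<^sub>m ?d"
  let ?P = "kron ?I (anc_zero 2)" let ?H = "kron ?I (hpow 2)"
  let ?V1 = "kron U (1\<^sub>m 4) * layer1_full n 2 C1 * ?H" let ?V2 = "?H * layer2_full n 2 C2"
  let ?\<sigma>0 = "kron \<rho> (anc_zero 2)"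
  have P: "?P \<in> carrier_mat ?D ?D" and H: "?H \<in> carrier_mat ?D ?D" and \<sigma>0: "?\<sigma>0 \<in> carrier_mat ?D ?D"
    using \<rho> by (auto simp: kron_carrier[of _ ?d ?d _ 4 4, simplified])
  have V1: "?V1 \<in> carrier_mat ?D ?D" and V2: "?V2 \<in> carrier_mat ?D ?D"
    using layer1_full_carrier[OF C1] layer2_full_carrier[OF C2] U H
    by (auto intro!: mult_carrier_mat kron_carrier[of _ ?d ?d _ 4 4, simplified])
  have KE: "\<forall>E\<in>set (map (\<lambda>E. kron E (1\<^sub>m 4)) Ks). E \<in> carrier_mat ?D ?D"
    using Ks by (auto intro!: kron_carrier[of _ ?d ?d _ 4 4, simplified])
  have adjP: "adj ?P = ?P" and P\<sigma>0: "?P * ?\<sigma>0 * ?P = ?\<sigma>0"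
    using \<rho> by (simp_all add: adj_kron adj_anc_zero kron_mult anc_zero_idem)
  have S: "apply_kraus (map (\<lambda>E. kron E (1\<^sub>m 4)) Ks) ((?V1 * ?P) * ?\<sigma>0 * adj (?V1 * ?P)) \<in> carrier_mat ?D ?D"
    using mult_carrier_mat[OF mult_carrier_mat[OF mult_carrier_mat[OF V1 P] \<sigma>0] adj_carrier[OF mult_carrier_mat[OF V1 P]]]
    by (rule apply_kraus_carrier[OF KE])
  note reassoc = projector_sandwich_reassoc[OF P V1 V2 \<sigma>0 S adjP P\<sigma>0]
  have four: "(2::nat)^2 = 4" by simp
  have "psp_final n 2 C1 C2 U Ks \<rho>
      = (?P * ?V2) * apply_kraus (map (\<lambda>E. kron E (1\<^sub>m 4)) Ks) ((?V1 * ?P) * ?\<sigma>0 * adj (?V1 * ?P)) * adj (?P * ?V2)"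
    unfolding psp_final_def Let_def four reassoc(1) by (rule reassoc(2))
  also have "\<dots> = apply_kraus (map (sandwich_kraus n C1 C2 U) Ks) ?\<sigma>0"
    using apply_kraus_sandwich[OF mult_carrier_mat[OF P V2] mult_carrier_mat[OF V1 P] \<sigma>0 KE]
    by (simp add: comp_def sandwich_kraus_def[abs_def] del: mult_assoc_dims)
  finally show ?thesis .
qed

lemma sandwich_kraus_weight_one:
  assumes uU: "unitary_mat (2^n) U" and q: "q < n" and A: "A \<in> carrier_mat 2 2"
  shows "sandwich_kraus n (pre_checks n U) (checks n) U (on_qubit n q A)
    = kron (((A $$ (0,0) + A $$ (1,1)) / 2) \<cdot>\<^sub>m U) (anc_zero 2)"
proof -
  have U: "U \<in> carrier_mat (2^n) (2^n)" using uU by (rule unitary_carrier)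
  interpret two_checks n "pre_checks n U" "checks n" "on_qubit n q A" U
    using U q A by unfold_locales auto
  show ?thesis using sandwich_kraus_eq postselected_op_weight_one[OF uU q A] by simp
qed

lemma psp_final_checks:
  assumes uU: "unitary_mat (2^n) U" and \<rho>: "\<rho> \<in> carrier_mat (2^n) (2^n)"
    and Ks: "\<forall>E \<in> set Ks. weight_le1 n E"
  shows "\<exists>p. psp_final n 2 (pre_checks n U) (checks n) U Ks \<rho> = p \<cdot>\<^sub>m kron (U * \<rho> * adj U) (anc_zero 2)"
proof -
  let ?\<sigma>0 = "kron \<rho> (anc_zero 2)" let ?M = "U * \<rho> * adj U"
  let ?K = "sandwich_kraus n (pre_checks n U) (checks n) U"
  have U: "U \<in> carrier_mat (2^n) (2^n)" using uU by (rule unitary_carrier)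
  have "\<forall>E\<in>set Ks. \<exists>c. ?K E * ?\<sigma>0 * adj (?K E) = c \<cdot>\<^sub>m kron ?M (anc_zero 2)"
  proof
    fix E assume "E \<in> set Ks"
    with Ks obtain q A where q: "q < n" and A: "A \<in> carrier_mat 2 2" and EA: "E = on_qubit n q A"
      unfolding weight_le1_def by blast
    let ?t = "(A $$ (0,0) + A $$ (1,1)) / 2"
    have "?K E * ?\<sigma>0 * adj (?K E) = kron ((?t \<cdot>\<^sub>m U) * \<rho> * adj (?t \<cdot>\<^sub>m U)) (anc_zero 2)"
      unfolding EA sandwich_kraus_weight_one[OF uU q A]
      using U \<rho> by (simp add: adj_kron kron_mult adj_anc_zero anc_zero_idem)
    then show "\<exists>c. ?K E * ?\<sigma>0 * adj (?K E) = c \<cdot>\<^sub>m kron ?M (anc_zero 2)"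
      unfolding smult_conj_smult[OF U \<rho>] kron_smult_left by blast
  qed
  from bchoice[OF this] obtain c
    where "\<forall>E\<in>set Ks. ?K E * ?\<sigma>0 * adj (?K E) = c E \<cdot>\<^sub>m kron ?M (anc_zero 2)" ..
  then have "apply_kraus (map ?K Ks) ?\<sigma>0 = sum_list (map c Ks) \<cdot>\<^sub>m kron ?M (anc_zero 2)"
    using U \<rho> by (intro apply_kraus_scalar_multiples) auto
  moreover have "\<forall>E \<in> set Ks. E \<in> carrier_mat (2^n) (2^n)"
    using Ks by (auto simp: weight_le1_def)
  ultimately show ?thesis using psp_final_2_eq_apply_kraus[of "pre_checks n U" n "checks n" U \<rho> Ks] U \<rho>
    by auto
qed

lemma tr_kron_anc_zero: assumes "M \<in> carrier_mat d d" shows "tr (kron M (anc_zero 2)) = tr M"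
proof -
  have "tr (kron M (anc_zero 2)) = (\<Sum>x<d. \<Sum>y<4. kron M (anc_zero 2) $$ (x*4+y, x*4+y))"
    unfolding tr_def using assms by (simp add: sum_lessThan_mult_split)
  also have "\<dots> = (\<Sum>x<d. \<Sum>y<4. M $$ (x,x) * anc_zero 2 $$ (y,y))"
  proof (intro sum.cong refl)
    fix x y assume "x \<in> {..<d}" and "y \<in> {..<4::nat}"
    moreover have "x*4+y < d*4" using calculation by auto
    ultimately show "kron M (anc_zero 2) $$ (x*4+y, x*4+y) = M $$ (x,x) * anc_zero 2 $$ (y,y)"
      using assms by (simp add: kron_index)
  qed
  also have "\<dots> = tr M" unfolding tr_def using assms by (simp add: anc_zero_def eval_nat_numeral)
  finally show ?thesis .
qed

lemma ptrace_anc_kron_anc_zero: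
  assumes M: "M \<in> carrier_mat (2^n) (2^n)" shows "ptrace_anc n 2 (kron M (anc_zero 2)) = M"
proof (rule eq_matI)
  fix i j assume "i < dim_row M" "j < dim_col M"
  then have i: "i < 2^n" and j: "j < 2^n" using M by auto
  have "ptrace_anc n 2 (kron M (anc_zero 2)) $$ (i,j) = (\<Sum>a<4. M $$ (i,j) * anc_zero 2 $$ (a,a))"
    unfolding ptrace_anc_def
  proof (simp add: i j, intro sum.cong refl)
    fix a assume a: "a \<in> {..<4::nat}"
    have "i*4+a < 2^n*4" "j*4+a < 2^n*4" using i j a by auto
    then show "kron M (anc_zero 2) $$ (i * 4 + a, j * 4 + a) = M $$ (i,j) * anc_zero 2 $$ (a,a)"
      using M a by (simp add: kron_index)
  qed
  then show "ptrace_anc n 2 (kron M (anc_zero 2)) $$ (i,j) = M $$ (i,j)"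
    by (simp add: anc_zero_def eval_nat_numeral)
qed (use M in \<open>auto simp: ptrace_anc_def\<close>)

lemma psp_state_checks:
  assumes uU: "unitary_mat (2^n) U" and \<rho>: "density (2^n) \<rho>"
    and Ks: "\<forall>E \<in> set Ks. weight_le1 n E"
    and p: "psp_prob n 2 (pre_checks n U) (checks n) U Ks \<rho> \<noteq> 0"
  shows "psp_state n 2 (pre_checks n U) (checks n) U Ks \<rho> = U * \<rho> * adj U"
proof -
  let ?M = "U * \<rho> * adj U"
  have U: "U \<in> carrier_mat (2^n) (2^n)" using uU by (rule unitary_carrier)
  have \<rho>c: "\<rho> \<in> carrier_mat (2^n) (2^n)" using \<rho> by (simp add: density_def psd_def)
  have M: "?M \<in> carrier_mat (2^n) (2^n)" using U \<rho>c by auto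
  obtain c where c: "psp_final n 2 (pre_checks n U) (checks n) U Ks \<rho> = c \<cdot>\<^sub>m kron ?M (anc_zero 2)"
    using psp_final_checks[OF uU \<rho>c Ks] by blast
  have "tr ?M = 1" using tr_unitary_conj[OF uU \<rho>c] \<rho> by (simp add: density_def)
  then have prob: "psp_prob n 2 (pre_checks n U) (checks n) U Ks \<rho> = c"
    unfolding psp_prob_def c kron_smult_left[symmetric] tr_kron_anc_zero[OF smult_carrier_mat[OF M]] tr_smult[OF M]
    by simp
  show ?thesis
    unfolding psp_state_def prob c kron_smult_left[symmetric] ptrace_anc_kron_anc_zero[OF smult_carrier_mat[OF M]]
    using p prob by (auto intro!: eq_matI)
qed

lemma controlled_checks_circuits:
  "\<exists>g1 g2 :: gate list. (\<forall>g \<in> set g1 \<union> set g2. gate_ok (n + 2) g)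
     \<and> circuit_mat (n + 2) g1 = ctrl n 2 1 (checks n 1)
     \<and> circuit_mat (n + 2) g2 = ctrl n 2 2 (checks n 2)
     \<and> cnot_count g1 + cnot_count g2 = 2 * n"
proof (intro exI conjI)
  let ?g1 = "concat (map (cx_gates n) [0..<n])" let ?g2 = "concat (map (cy_gates n) [0..<n])"
  have g1: "(\<forall>g\<in>set ?g1. gate_ok (n+2) g) \<and> circuit_mat (n+2) ?g1 = anc_ctrl 1 (checks n 1) (1\<^sub>m (2^n))"
    using circuit_mat_ctrl_tensor_pow[of 1 pauliX n "cx_gates n" n] cx_gates by (simp add: checks_def)
  have g2: "(\<forall>g\<in>set ?g2. gate_ok (n+2) g) \<and> circuit_mat (n+2) ?g2 = anc_ctrl 2 (checks n 2) (1\<^sub>m (2^n))"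
    using circuit_mat_ctrl_tensor_pow[of 2 pauliY n "cy_gates n" n] cy_gates by (simp add: checks_def)
  show "\<forall>g \<in> set ?g1 \<union> set ?g2. gate_ok (n + 2) g" using g1 g2 by blast
  show "circuit_mat (n + 2) ?g1 = ctrl n 2 1 (checks n 1)" using g1 by (simp add: ctrl_eq_anc_ctrl)
  show "circuit_mat (n + 2) ?g2 = ctrl n 2 2 (checks n 2)" using g2 by (simp add: ctrl_eq_anc_ctrl)
  have "cnot_count ?g1 = n" "cnot_count ?g2 = n"
    by (rule cnot_count_concat, simp add: cx_gates_def cy_gates_def cnot_count_def is_cnot_def)+
  then show "cnot_count ?g1 + cnot_count ?g2 = 2 * n" by simp
qed

theorem lemma1:
  fixes n :: nat and U \<rho> :: "complex mat" and Ks :: "complex mat list"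
  assumes "n \<ge> 1"
    and "unitary_mat (2^n) U"
    and "density (2^n) \<rho>"
    and "kraus_channel (2^n) Ks"
    and "\<forall>E \<in> set Ks. weight_le1 n E"
  shows "\<exists>C1 C2 :: nat \<Rightarrow> complex mat.
      (\<forall>k \<in> {1, 2}. unitary_mat (2^n) (C1 k) \<and> unitary_mat (2^n) (C2 k) \<and> C2 k * U * C1 k = U)
    \<and> (psp_prob n 2 C1 C2 U Ks \<rho> \<noteq> 0 \<longrightarrow>
         fidelity (psp_state n 2 C1 C2 U Ks \<rho>) (U * \<rho> * adj U) = 1)
    \<and> (\<exists>g1 g2 :: gate list.
         (\<forall>g \<in> set g1 \<union> set g2. gate_ok (n + 2) g)
       \<and> circuit_mat (n + 2) g1 = ctrl n 2 1 (C2 1)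
       \<and> circuit_mat (n + 2) g2 = ctrl n 2 2 (C2 2)
       \<and> cnot_count g1 + cnot_count g2 = 2 * n)"
proof -
  have "\<forall>k \<in> {1, 2}. unitary_mat (2^n) (pre_checks n U k) \<and> unitary_mat (2^n) (checks n k)
      \<and> checks n k * U * pre_checks n U k = U"
    using assms(2) by (simp add: unitary_pre_checks unitary_checks checks_mult_mult_pre_checks)
  moreover have "psp_prob n 2 (pre_checks n U) (checks n) U Ks \<rho> \<noteq> 0 \<longrightarrow>
      fidelity (psp_state n 2 (pre_checks n U) (checks n) U Ks \<rho>) (U * \<rho> * adj U) = 1"
    using psp_state_checks[OF assms(2,3,5)] fidelity_refl[OF density_unitary_conj[OF assms(3,2)]] by simp
  ultimately show ?thesis using controlled_checks_circuits[of n] by blast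
qed

end
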